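(* If $f\in\mathcal S_T^1(\Omega_D,A)$, then $f$ is $T$-regular if and only if $\overline\partial_Tf=0$; moreover, (when $\Omega_D$ is a domain) $\mathcal{SR}_T(\Omega_D,A)$ is the image under $\mathcal I:\mathrm{Stem}^1_T(D,A\otimes\mathbb R^{2^\tau})\to\mathcal S_T^1(\Omega_D,A)$ of the kernel of $\overline\partial_T:\mathrm{Stem}^1_T\to\mathrm{Stem}^0_T$. If $f\in\mathcal S^2_T(\Omega_D,A)$, then $f$ is $T$-harmonic if and only if $\Delta_Tf=0$; moreover, the right $A$-submodule of $T$-harmonic elements of $\mathcal S^2_T(\Omega_D,A)$ is the image under $\mathcal I:\mathrm{Stem}^2_T\to\mathcal S^2_T(\Omega_D,A)$ of the kernel of $\Delta_T:\mathrm{Stem}^2_T\to\mathrm{Stem}^0_T$.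
   Context: $A$ is a finite-dimensional associative real algebra with unit and a $*$-involution $x\mapsto x^c$; $\mathbb S_A=\{x:x+x^c=0,xx^c=1\}\ne\emptyset$. $V\subseteq A$ has basis $(v_0=1,v_1,\dots,v_N)$, $N\ge1$, $v_s\in\mathbb S_A$ pairwise anticommuting for $s\ge1$, $V\subseteq\bigcup_{J\in\mathbb S_A}(\mathbb R+J\mathbb R)$; $A$ carries the Euclidean norm making a completion of this basis orthonormal. $\mathbb R_{\ell,m}=\mathrm{Span}_{\mathbb R}(v_\ell,\dots,v_m)$, $\mathbb S_{\ell,m}$ its unit sphere. $T=(t_0,\dots,t_\tau)$, $0\le t_0<\dots<t_\tau=N$, torus $\mathbb T=\mathbb S_{t_0+1,t_1}\times\cdots\times\mathbb S_{t_{\tau-1}+1,t_\tau}$ (for $\tau=0$ single index $J=\emptyset$). For $J\in\mathbb T$, $\beta\in\mathbb R^\tau$: $\beta J=\sum\beta_hJ_h$; $J_\emptyset=1$, $J_K=J_{k_1}\cdots J_{k_p}$; $\overline\beta^h$ flips the sign of $\beta_h$; $\sigma(h,K)$ is the parity of $\#\{k\in K:k\le h\}$. $D\subseteq\mathbb R_{0,t_0}\times\mathbb R^\tau$ is open, reflection invariant, $\Omega_D=\{\alpha+\beta J\}$ open. $T$-stem functions $F=\sum_KE_KF_K$ ($F_K(\alpha,\overline\beta^h)=F_K$ if $h\notin K$, $-F_K$ if $h\in K$) induce $T$-functions $\mathcal I(F)(\alpha+\beta J)=\sum_KJ_KF_K(\alpha,\beta)$; $\mathrm{Stem}^p_T$,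 $\mathcal S^p_T$: those of class $C^p$. Slice operators on $\mathbb R_J=\mathrm{Span}(v_0,\dots,v_{t_0},J_1,\dots,J_\tau)$: $\overline\partial_J=\sum_{s=0}^{t_0}v_s\partial_s+\sum_uJ_u\partial_{t_0+u}$, $\Delta_J=\sum_{s=0}^{t_0+\tau}\partial_s^2$ (directional derivatives along $v_s$, $J_u$). $f$ is $T$-regular (resp. $T$-harmonic) if $\overline\partial_Jf_J\equiv0$ (resp. $\Delta_Jf_J\equiv0$) for all $J\in\mathbb T$, where $f_J$ is the restriction to $\Omega_D\cap\mathbb R_J$. $\mathcal{SR}_T(\Omega_D,A)$ = $T$-functions that are $T$-regular. Global operators on stems: with $\alpha=\sum_{s\le t_0}x_sv_s$, $\overline\partial^u_\alpha=\partial_{\alpha_0}-(-1)^u\sum_{s=1}^{t_0}v_s\partial_{\alpha_s}$, $\overline\partial_\alpha=\overline\partial^1_\alpha$, $\partial_\alpha=\overline\partial^0_\alpha$; $(\overline\partial_TF)_K=\overline\partial^{|K|+1}_\alpha F_K+\sum_h(-1)^{\sigma(h,K)+1}\partial_{\beta_h}F_{K\triangle\{h\}}$, $(\Delta_TF)_K=\partial_\alpha\overline\partial_\alpha F_K+\sum_h\partial^2_{\beta_h}F_K$, and on $T$-functions $\overline\partial_T\mathcal I(F)=\mathcal I(\overline\partial_TF)$, $\Delta_T\mathcal I(F)=\mathcal I(\Delta_TF)$. *)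

theory Defs
  imports "HOL-Analysis.Analysis"
begin

text \<open>
  The algebra A is a type of class real_algebra_1 (associative unital real algebra)
  which is also a euclidean_space (finite dimensional with an inner product; the basis
  v_0,...,v_N is assumed orthonormal for that inner product in the theorem).
  Points of R^tau are functions nat to real supported in 1..tau, with the product topology
  (which on that subspace is the Euclidean topology).  A stem function F is a family
  F K (K a subset of 1..tau) of A-valued functions on D.
\<close>

type_synonym 'a stempt = "'a \<times> (nat \<Rightarrow> real)"

definition SA :: "('a::real_algebra_1 \<Rightarrow> 'a) \<Rightarrow> 'a set" where
  "SA cj = {x. x + cj x = 0 \<and> x * cj x = 1}"

definition Rlm :: "(nat \<Rightarrow> 'a::real_vector) \<Rightarrow> nat \<Rightarrow> nat \<Rightarrow> 'a set" where
  "Rlm v l m = span (v ` {l..m})"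

definition Slm :: "(nat \<Rightarrow> 'a::real_normed_vector) \<Rightarrow> nat \<Rightarrow> nat \<Rightarrow> 'a set" where
  "Slm v l m = {x \<in> Rlm v l m. norm x = 1}"

definition torus :: "(nat \<Rightarrow> 'a::real_normed_vector) \<Rightarrow> (nat \<Rightarrow> nat) \<Rightarrow> nat \<Rightarrow> (nat \<Rightarrow> 'a) set" where
  "torus v t \<tau> = {J. \<forall>h\<in>{1..\<tau>}. J h \<in> Slm v (t (h - 1) + 1) (t h)}"

definition Rtau :: "nat \<Rightarrow> (nat \<Rightarrow> real) set" where
  "Rtau \<tau> = {\<beta>. \<forall>h. h \<notin> {1..\<tau>} \<longrightarrow> \<beta> h = 0}"

definition betaJ :: "nat \<Rightarrow> (nat \<Rightarrow> real) \<Rightarrow> (nat \<Rightarrow> 'a::real_vector) \<Rightarrow> 'a" where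
  "betaJ \<tau> \<beta> J = (\<Sum>h=1..\<tau>. \<beta> h *\<^sub>R J h)"

definition JK :: "(nat \<Rightarrow> 'a::monoid_mult) \<Rightarrow> nat set \<Rightarrow> 'a" where
  "JK J K = prod_list (map J (sorted_list_of_set K))"

definition flip :: "nat \<Rightarrow> (nat \<Rightarrow> real) \<Rightarrow> nat \<Rightarrow> real" where
  "flip h \<beta> = \<beta>(h := - \<beta> h)"

definition OmegaD :: "(nat \<Rightarrow> 'a::real_normed_vector) \<Rightarrow> (nat \<Rightarrow> nat) \<Rightarrow> nat \<Rightarrow> 'a stempt set \<Rightarrow> 'a set" where
  "OmegaD v t \<tau> D = {\<alpha> + betaJ \<tau> \<beta> J | \<alpha> \<beta> J. (\<alpha>, \<beta>) \<in> D \<and> J \<in> torus v t \<tau>}"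

definition dA :: "(nat \<Rightarrow> 'a::real_normed_vector) \<Rightarrow> nat \<Rightarrow> ('a stempt \<Rightarrow> 'b::real_normed_vector) \<Rightarrow> 'a stempt \<Rightarrow> 'b" where
  "dA v s G = (\<lambda>(\<alpha>, \<beta>). vector_derivative (\<lambda>r. G (\<alpha> + r *\<^sub>R v s, \<beta>)) (at 0))"

definition dB :: "nat \<Rightarrow> ('a stempt \<Rightarrow> 'b::real_normed_vector) \<Rightarrow> 'a stempt \<Rightarrow> 'b" where
  "dB h G = (\<lambda>(\<alpha>, \<beta>). vector_derivative (\<lambda>r. G (\<alpha>, \<beta>(h := \<beta> h + r))) (at 0))"

definition hasA :: "(nat \<Rightarrow> 'a::real_normed_vector) \<Rightarrow> nat \<Rightarrow> ('a stempt \<Rightarrow> 'b::real_normed_vector) \<Rightarrow> 'a stempt \<Rightarrow> bool" where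
  "hasA v s G z = ((\<lambda>r. G (fst z + r *\<^sub>R v s, snd z)) differentiable (at 0))"

definition hasB :: "nat \<Rightarrow> ('a stempt \<Rightarrow> 'b::real_normed_vector) \<Rightarrow> 'a stempt \<Rightarrow> bool" where
  "hasB h G z = ((\<lambda>r. G (fst z, (snd z)(h := snd z h + r))) differentiable (at 0))"

fun Cp :: "(nat \<Rightarrow> 'a::real_normed_vector) \<Rightarrow> nat \<Rightarrow> nat \<Rightarrow> 'a stempt set \<Rightarrow> nat
           \<Rightarrow> ('a stempt \<Rightarrow> 'b::real_normed_vector) \<Rightarrow> bool" where
  "Cp v t0 \<tau> D 0 G = continuous_on D G"
| "Cp v t0 \<tau> D (Suc p) G =
     (continuous_on D G
      \<and> (\<forall>s\<in>{0..t0}. (\<forall>z\<in>D. hasA v s G z) \<and> Cp v t0 \<tau> D p (dA v s G))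
      \<and> (\<forall>h\<in>{1..\<tau>}. (\<forall>z\<in>D. hasB h G z) \<and> Cp v t0 \<tau> D p (dB h G)))"

definition is_stem :: "nat \<Rightarrow> 'a stempt set \<Rightarrow> (nat set \<Rightarrow> 'a stempt \<Rightarrow> 'a::real_vector) \<Rightarrow> bool" where
  "is_stem \<tau> D F = (\<forall>K. K \<subseteq> {1..\<tau>} \<longrightarrow> (\<forall>h\<in>{1..\<tau>}. \<forall>\<alpha> \<beta>. (\<alpha>, \<beta>) \<in> D \<longrightarrow>
       F K (\<alpha>, flip h \<beta>) = (if h \<in> K then - F K (\<alpha>, \<beta>) else F K (\<alpha>, \<beta>))))"

definition Stem :: "(nat \<Rightarrow> 'a::real_normed_vector) \<Rightarrow> nat \<Rightarrow> nat \<Rightarrow> 'a stempt set \<Rightarrow> nat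
                    \<Rightarrow> (nat set \<Rightarrow> 'a stempt \<Rightarrow> 'a) set" where
  "Stem v t0 \<tau> D p = {F. is_stem \<tau> D F \<and> (\<forall>K. K \<subseteq> {1..\<tau>} \<longrightarrow> Cp v t0 \<tau> D p (F K))}"

definition induces :: "(nat \<Rightarrow> 'a::{real_normed_vector,monoid_mult}) \<Rightarrow> (nat \<Rightarrow> nat) \<Rightarrow> nat \<Rightarrow> 'a stempt set
                       \<Rightarrow> (nat set \<Rightarrow> 'a stempt \<Rightarrow> 'a) \<Rightarrow> ('a \<Rightarrow> 'a) \<Rightarrow> bool" where
  "induces v t \<tau> D F f = (\<forall>\<alpha> \<beta> J. (\<alpha>, \<beta>) \<in> D \<longrightarrow> J \<in> torus v t \<tau> \<longrightarrow>
       f (\<alpha> + betaJ \<tau> \<beta> J) = (\<Sum>K\<in>Pow {1..\<tau>}. JK J K * F K (\<alpha>, \<beta>)))"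

definition Ivanishes :: "(nat \<Rightarrow> 'a::{real_normed_vector,monoid_mult}) \<Rightarrow> (nat \<Rightarrow> nat) \<Rightarrow> nat \<Rightarrow> 'a stempt set
                       \<Rightarrow> (nat set \<Rightarrow> 'a stempt \<Rightarrow> 'a) \<Rightarrow> bool" where
  "Ivanishes v t \<tau> D G = (\<forall>\<alpha> \<beta> J. (\<alpha>, \<beta>) \<in> D \<longrightarrow> J \<in> torus v t \<tau> \<longrightarrow>
       (\<Sum>K\<in>Pow {1..\<tau>}. JK J K * G K (\<alpha>, \<beta>)) = 0)"

definition Sp :: "(nat \<Rightarrow> 'a::{real_normed_vector,monoid_mult}) \<Rightarrow> (nat \<Rightarrow> nat) \<Rightarrow> nat \<Rightarrow> 'a stempt set
                  \<Rightarrow> nat \<Rightarrow> ('a \<Rightarrow> 'a) set" where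
  "Sp v t \<tau> D p = {f. \<exists>F\<in>Stem v (t 0) \<tau> D p. induces v t \<tau> D F f}"

definition dbar_alpha :: "(nat \<Rightarrow> 'a::{real_normed_vector,ring_1}) \<Rightarrow> nat \<Rightarrow> nat
                          \<Rightarrow> ('a stempt \<Rightarrow> 'a) \<Rightarrow> 'a stempt \<Rightarrow> 'a" where
  "dbar_alpha v t0 u G = (\<lambda>z. dA v 0 G z - ((-1::real) ^ u) *\<^sub>R (\<Sum>s=1..t0. v s * dA v s G z))"

definition dbarT :: "(nat \<Rightarrow> 'a::{real_normed_vector,ring_1}) \<Rightarrow> nat \<Rightarrow> nat
                     \<Rightarrow> (nat set \<Rightarrow> 'a stempt \<Rightarrow> 'a) \<Rightarrow> nat set \<Rightarrow> 'a stempt \<Rightarrow> 'a" where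
  "dbarT v t0 \<tau> F K = (\<lambda>z. dbar_alpha v t0 (card K + 1) (F K) z
      + (\<Sum>h=1..\<tau>. ((-1::real) ^ (card {k\<in>K. k \<le> h} + 1)) *\<^sub>R
                     dB h (F (if h \<in> K then K - {h} else insert h K)) z))"

definition LapT :: "(nat \<Rightarrow> 'a::{real_normed_vector,ring_1}) \<Rightarrow> nat \<Rightarrow> nat
                     \<Rightarrow> (nat set \<Rightarrow> 'a stempt \<Rightarrow> 'a) \<Rightarrow> nat set \<Rightarrow> 'a stempt \<Rightarrow> 'a" where
  "LapT v t0 \<tau> F K = (\<lambda>z. dbar_alpha v t0 0 (dbar_alpha v t0 1 (F K)) z
      + (\<Sum>h=1..\<tau>. dB h (dB h (F K)) z))"

definition RJ :: "(nat \<Rightarrow> 'a::real_vector) \<Rightarrow> nat \<Rightarrow> nat \<Rightarrow> (nat \<Rightarrow> 'a) \<Rightarrow> 'a set" where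
  "RJ v t0 \<tau> J = span (v ` {0..t0} \<union> J ` {1..\<tau>})"

definition dd :: "('a::real_normed_vector \<Rightarrow> 'b::real_normed_vector) \<Rightarrow> 'a \<Rightarrow> 'a \<Rightarrow> 'b" where
  "dd f w x = vector_derivative (\<lambda>r. f (x + r *\<^sub>R w)) (at 0)"

definition hasd :: "('a::real_normed_vector \<Rightarrow> 'b::real_normed_vector) \<Rightarrow> 'a \<Rightarrow> 'a \<Rightarrow> bool" where
  "hasd f w x = ((\<lambda>r. f (x + r *\<^sub>R w)) differentiable (at 0))"

definition T_regular :: "(nat \<Rightarrow> 'a::{real_normed_vector,ring_1}) \<Rightarrow> (nat \<Rightarrow> nat) \<Rightarrow> nat \<Rightarrow> 'a stempt set
                         \<Rightarrow> ('a \<Rightarrow> 'a) \<Rightarrow> bool" where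
  "T_regular v t \<tau> D f = (\<forall>J\<in>torus v t \<tau>. \<forall>x\<in>OmegaD v t \<tau> D \<inter> RJ v (t 0) \<tau> J.
      (\<forall>s\<in>{0..t 0}. hasd f (v s) x) \<and> (\<forall>u\<in>{1..\<tau>}. hasd f (J u) x) \<and>
      (\<Sum>s=0..t 0. v s * dd f (v s) x) + (\<Sum>u=1..\<tau>. J u * dd f (J u) x) = 0)"

definition T_harmonic :: "(nat \<Rightarrow> 'a::{real_normed_vector,ring_1}) \<Rightarrow> (nat \<Rightarrow> nat) \<Rightarrow> nat \<Rightarrow> 'a stempt set
                         \<Rightarrow> ('a \<Rightarrow> 'a) \<Rightarrow> bool" where
  "T_harmonic v t \<tau> D f = (\<forall>J\<in>torus v t \<tau>. \<forall>x\<in>OmegaD v t \<tau> D \<inter> RJ v (t 0) \<tau> J.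
      (\<forall>s\<in>{0..t 0}. hasd f (v s) x \<and> hasd (dd f (v s)) (v s) x) \<and>
      (\<forall>u\<in>{1..\<tau>}. hasd f (J u) x \<and> hasd (dd f (J u)) (J u) x) \<and>
      (\<Sum>s=0..t 0. dd (dd f (v s)) (v s) x) + (\<Sum>u=1..\<tau>. dd (dd f (J u)) (J u) x) = 0)"

definition SR :: "(nat \<Rightarrow> 'a::{real_normed_vector,ring_1}) \<Rightarrow> (nat \<Rightarrow> nat) \<Rightarrow> nat \<Rightarrow> 'a stempt set
                  \<Rightarrow> ('a \<Rightarrow> 'a) set" where
  "SR v t \<tau> D = {f \<in> Sp v t \<tau> D 1. T_regular v t \<tau> D f}"

end

theory Submission
  imports Defs
begin

(* On a slice R_J, the directional derivatives of f = I(F) along v_s and along J_u are again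
   induced, by the partial derivatives of the stem components. The v_s (s >= 1) and the
   components of J are anticommuting imaginary units, so moving v_s or J_u across the ordered
   product J_K costs only a sign (and, for J_u, toggles u in K). This turns the slice
   Cauchy-Riemann operator applied to f into I(dbar_T F), and the slice Laplacian into
   I(Delta_T F), where the Clifford cross terms cancel by the symmetry of mixed partials.
   Reflection invariance of D makes every point of Omega_D on R_J of the form alpha + beta J with
   (alpha, beta) in D. Finally I is injective: replacing J_h by -J_h flips the sign of exactly the
   terms with h in K, so if I(G) vanishes for every J in the torus, each component of G vanishes. *)

section \<open>Orthonormal frames of anticommuting imaginary units\<close>

lemma span_image_finite_sum:
  assumes "finite I" "y \<in> span (g ` I)"
  shows "\<exists>c. y = (\<Sum>i\<in>I. c i *\<^sub>R g i)"
  using assms(2)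
proof (induction rule: span_induct_alt)
  case base
  then show ?case by (intro exI[of _ "\<lambda>_. 0"]) simp
next
  case (step c x y)
  then obtain i d where "i \<in> I" "x = g i" "y = (\<Sum>i\<in>I. d i *\<^sub>R g i)" by blast
  then show ?case using assms(1)
    by (intro exI[of _ "d(i := d i + c)"]) (simp add: sum.remove algebra_simps)
qed

lemma scaled_unit_vectors_eq:
  fixes x y :: "'a::real_normed_vector"
  assumes "norm x = 1" "norm y = 1" "a *\<^sub>R x = c *\<^sub>R y"
  shows "a *\<^sub>R x = a *\<^sub>R y \<or> x = - y"
proof (cases "a = 0")
  case False
  have "\<bar>a\<bar> = \<bar>c\<bar>" using arg_cong[OF assms(3), of norm] assms(1,2) by simp
  then have "c = a \<or> c = - a" by linarith
  then show ?thesis using assms(3) False by (auto simp flip: scaleR_minus_right)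
qed simp

locale clifford_frame =
  fixes v :: "nat \<Rightarrow> 'a::{real_algebra_1,euclidean_space}" and N :: nat
  assumes v0: "v 0 = 1"
    and frame_square: "\<And>s. s \<in> {1..N} \<Longrightarrow> v s * v s = -1"
    and frame_anticommute: "\<And>s r. s \<in> {1..N} \<Longrightarrow> r \<in> {1..N} \<Longrightarrow> s \<noteq> r \<Longrightarrow> v s * v r = - (v r * v s)"
    and frame_orthonormal: "\<And>s r. s \<le> N \<Longrightarrow> r \<le> N \<Longrightarrow> inner (v s) (v r) = (if s = r then 1 else 0)"
begin

lemma inner_disjoint_frame_spans:
  assumes "S \<subseteq> {..N}" "S' \<subseteq> {..N}" "S \<inter> S' = {}" "x \<in> span (v ` S)" "y \<in> span (v ` S')"
  shows "inner x y = 0"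
proof -
  have "orthogonal (v s) y" if "s \<in> S" for s
    using assms(5)
    by (rule orthogonal_to_span)
       (use that assms(1-3) frame_orthonormal in \<open>force simp: orthogonal_def\<close>)
  then have "orthogonal y x"
    by (intro orthogonal_to_span[OF assms(4)]) (auto simp: orthogonal_commute)
  then show ?thesis by (simp add: orthogonal_def inner_commute)
qed

lemma frame_span_expansion:
  assumes "finite S" "S \<subseteq> {..N}" "y \<in> span (v ` S)"
  shows "(\<Sum>s\<in>S. inner y (v s) *\<^sub>R v s) = y"
proof (rule linear_eq_on_span[OF _ linear_id _ assms(3), unfolded id_def])
  show "linear (\<lambda>y. \<Sum>s\<in>S. inner y (v s) *\<^sub>R v s)"
    by (rule linearI) (simp_all add: inner_add_left scaleR_add_left sum.distrib scaleR_sum_right)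
  fix x assume "x \<in> v ` S"
  then obtain r where r: "r \<in> S" "x = v r" by blast
  then have "(\<Sum>s\<in>S. inner x (v s) *\<^sub>R v s) = (\<Sum>s\<in>S. if s = r then v s else 0)"
    using assms(2) frame_orthonormal[of r] by (intro sum.cong) (auto simp: subset_eq)
  then show "(\<Sum>s\<in>S. inner x (v s) *\<^sub>R v s) = x"
    using assms(1) r by simp
qed

lemma anticommutator_frame_span:
  assumes "x \<in> span (v ` {1..N})" "y \<in> span (v ` {1..N})"
  shows "x * y + y * x = (-2 * inner x y) *\<^sub>R 1"
proof (rule bilinear_eq[where f = "\<lambda>x y. x * y + y * x" and g = "\<lambda>x y. (-2 * inner x y) *\<^sub>R 1"])
  show "bilinear (\<lambda>x y::'a. x * y + y * x)"
    unfolding bilinear_def by (auto intro!: linearI simp: ring_distribs scaleR_right_distrib)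
  show "bilinear (\<lambda>x y::'a. (-2 * inner x y) *\<^sub>R (1::'a))"
    unfolding bilinear_def
    by (auto intro!: linearI simp: inner_add_left inner_add_right distrib_left scaleR_add_left)
  fix x y assume "x \<in> v ` {1..N}" "y \<in> v ` {1..N}"
  then obtain s r where "s \<in> {1..N}" "r \<in> {1..N}" "x = v s" "y = v r" by blast
  then show "x * y + y * x = (-2 * inner x y) *\<^sub>R 1"
    using frame_square[of s] frame_anticommute[of s r] frame_orthonormal[of s r]
    by (cases "s = r") (auto simp: scaleR_conv_of_real)
qed (use assms in auto)

lemma frame_double_sum_symmetric:
  assumes R: "R \<subseteq> {1..N}" and sym: "\<And>s r. s \<in> R \<Longrightarrow> r \<in> R \<Longrightarrow> M s r = M r s"
  shows "(\<Sum>s\<in>R. \<Sum>r\<in>R. v s * (v r * M s r)) = - (\<Sum>s\<in>R. M s s)"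
proof -
  let ?X = "\<Sum>s\<in>R. \<Sum>r\<in>R. v s * (v r * M s r)"
  have "finite R" using R finite_subset by blast
  have "?X = (\<Sum>r\<in>R. \<Sum>s\<in>R. v s * (v r * M s r))" by (rule sum.swap)
  also have "\<dots> = (\<Sum>r\<in>R. \<Sum>s\<in>R. v s * (v r * M r s))" using sym by (intro sum.cong) auto
  finally have swapped: "?X = (\<Sum>s\<in>R. \<Sum>r\<in>R. v r * (v s * M s r))" .
  have "?X + ?X = (\<Sum>s\<in>R. \<Sum>r\<in>R. (v s * v r + v r * v s) * M s r)"
    by (subst (2) swapped) (simp add: sum.distrib[symmetric] distrib_right mult.assoc)
  also have "\<dots> = (\<Sum>s\<in>R. \<Sum>r\<in>R. if r = s then (-2::real) *\<^sub>R M s s else 0)"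
  proof (intro sum.cong refl)
    fix s r assume "s \<in> R" "r \<in> R"
    then have "v s * v r + v r * v s = (-2 * inner (v s) (v r)) *\<^sub>R 1"
      using R by (intro anticommutator_frame_span) (auto intro: span_base)
    moreover have "s \<le> N" "r \<le> N" using \<open>s \<in> R\<close> \<open>r \<in> R\<close> R by auto
    ultimately show "(v s * v r + v r * v s) * M s r = (if r = s then (-2::real) *\<^sub>R M s s else 0)"
      using frame_orthonormal[of s r] by auto
  qed
  also have "\<dots> = 2 *\<^sub>R (- (\<Sum>s\<in>R. M s s))"
    using \<open>finite R\<close> by (simp add: scaleR_sum_right sum_negf)
  finally have "2 *\<^sub>R ?X = 2 *\<^sub>R (- (\<Sum>s\<in>R. M s s))" by (simp add: scaleR_2)
  then show ?thesis using scaleR_cancel_left[of 2 ?X "- (\<Sum>s\<in>R. M s s)"] by simp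
qed

end

section \<open>Ordered products \<open>J\<^sub>K\<close>\<close>

lemma prod_list_anticommute:
  fixes J :: "nat \<Rightarrow> 'a::real_algebra_1"
  assumes "\<forall>k\<in>set ks. w * J k = - (J k * w)"
  shows "w * prod_list (map J ks) = ((-1::real) ^ length ks) *\<^sub>R (prod_list (map J ks) * w)"
  using assms
proof (induction ks)
  case (Cons k ks)
  have "w * prod_list (map J (k # ks)) = - (J k * (w * prod_list (map J ks)))"
    using Cons.prems by (simp flip: mult.assoc)
  also have "\<dots> = ((-1::real) ^ length (k # ks)) *\<^sub>R (prod_list (map J (k # ks)) * w)"
    using Cons by (simp add: mult.assoc)
  finally show ?case .
qed simp

lemma JK_anticommute:
  fixes J :: "nat \<Rightarrow> 'a::real_algebra_1"
  assumes "finite K" "\<forall>k\<in>K. w * J k = - (J k * w)"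
  shows "w * JK J K = ((-1::real) ^ card K) *\<^sub>R (JK J K * w)"
  using prod_list_anticommute[of "sorted_list_of_set K" w J] assms by (simp add: JK_def)

lemma sorted_list_of_set_Un_less:
  assumes "finite A" "finite B" "\<forall>a\<in>A. \<forall>b\<in>B. a < (b::nat)"
  shows "sorted_list_of_set (A \<union> B) = sorted_list_of_set A @ sorted_list_of_set B"
proof -
  have "A \<inter> B = {}" using assms(3) by auto
  then have "sorted_wrt (<) (sorted_list_of_set A @ sorted_list_of_set B) \<and>
      set (sorted_list_of_set A @ sorted_list_of_set B) = A \<union> B \<and>
      length (sorted_list_of_set A @ sorted_list_of_set B) = card (A \<union> B)"
    using assms by (simp add: sorted_wrt_append card_Un_disjoint)
  then show ?thesis using sorted_list_of_set_unique assms(1,2) by blast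
qed

lemma JK_Un_less:
  assumes "finite A" "finite B" "\<forall>a\<in>A. \<forall>b\<in>B. a < (b::nat)"
  shows "JK J (A \<union> B) = JK J A * JK J B"
  using sorted_list_of_set_Un_less[OF assms] by (simp add: JK_def)

lemma JK_split_at:
  assumes "finite K" "u \<notin> K"
  shows "JK J K = JK J {k\<in>K. k < u} * JK J {k\<in>K. u < k}"
proof -
  have "K = {k\<in>K. k < u} \<union> {k\<in>K. u < k}"
    using assms(2) by auto (metis linorder_neqE_nat)
  also have "JK J \<dots> = JK J {k\<in>K. k < u} * JK J {k\<in>K. u < k}"
    by (rule JK_Un_less) (use assms(1) in auto)
  finally show ?thesis .
qed

lemma JK_insert_split_at:
  assumes "finite K" "u \<notin> K"
  shows "JK J (insert u K) = JK J {k\<in>K. k < u} * J u * JK J {k\<in>K. u < k}"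
proof -
  have "insert u K = {k\<in>K. k < u} \<union> ({u} \<union> {k\<in>K. u < k})"
    using assms(2) by auto
  also have "JK J \<dots> = JK J {k\<in>K. k < u} * JK J ({u} \<union> {k\<in>K. u < k})"
    by (rule JK_Un_less) (use assms(1) in auto)
  also have "JK J ({u} \<union> {k\<in>K. u < k}) = J u * JK J {k\<in>K. u < k}"
    by (subst JK_Un_less) (use assms(1) in \<open>auto simp: JK_def\<close>)
  finally show ?thesis by (simp add: mult.assoc)
qed

lemma J_mult_JK_notin:
  fixes J :: "nat \<Rightarrow> 'a::real_algebra_1"
  assumes "finite K" "u \<notin> K" "\<forall>k\<in>K. J u * J k = - (J k * J u)"
  shows "J u * JK J K = ((-1::real) ^ card {k\<in>K. k < u}) *\<^sub>R JK J (insert u K)"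
proof -
  let ?A = "JK J {k\<in>K. k < u}" and ?B = "JK J {k\<in>K. u < k}"
  have "J u * ?A = ((-1::real) ^ card {k\<in>K. k < u}) *\<^sub>R (?A * J u)"
    by (rule JK_anticommute) (use assms in auto)
  then have "(J u * ?A) * ?B = ((-1::real) ^ card {k\<in>K. k < u}) *\<^sub>R (?A * J u * ?B)"
    by simp
  then show ?thesis
    using JK_split_at[OF assms(1,2), of J] JK_insert_split_at[OF assms(1,2), of J]
    by (simp add: mult.assoc)
qed

lemma J_mult_JK_in:
  fixes J :: "nat \<Rightarrow> 'a::real_algebra_1"
  assumes "finite K" "u \<in> K" "J u * J u = -1" "\<forall>k\<in>K. k \<noteq> u \<longrightarrow> J u * J k = - (J k * J u)"
  shows "J u * JK J K = - ((-1::real) ^ card {k\<in>K. k < u}) *\<^sub>R JK J (K - {u})"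
proof -
  let ?s = "(-1::real) ^ card {k\<in>K. k < u}"
  have "{k\<in>K - {u}. k < u} = {k\<in>K. k < u}" "insert u (K - {u}) = K" using assms(2) by auto
  then have "J u * JK J (K - {u}) = ?s *\<^sub>R JK J K"
    using J_mult_JK_notin[of "K - {u}" u J] assms by auto
  then have "(J u * J u) * JK J (K - {u}) = ?s *\<^sub>R (J u * JK J K)"
    by (simp add: mult.assoc)
  then have "?s *\<^sub>R (J u * JK J K) = - JK J (K - {u})"
    using assms(3) by simp
  then have "?s *\<^sub>R (?s *\<^sub>R (J u * JK J K)) = - ?s *\<^sub>R JK J (K - {u})"
    by simp
  then show ?thesis by (simp flip: power_mult_distrib)
qed

lemma JK_update_neg:
  fixes J :: "nat \<Rightarrow> 'a::ring_1"
  assumes "finite K"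
  shows "JK (J(h := - J h)) K = (if h \<in> K then - JK J K else JK J K)"
proof -
  have "prod_list (map (J(h := - J h)) ks)
      = (if h \<in> set ks then - prod_list (map J ks) else prod_list (map J ks))"
    if "distinct ks" for ks
    using that by (induction ks) (auto cong: map_cong)
  then show ?thesis using assms by (simp add: JK_def)
qed

lemma prod_list_left_invertible:
  fixes J :: "nat \<Rightarrow> 'a::ring_1"
  assumes "\<forall>k\<in>set ks. J k * J k = -1"
  shows "\<exists>b. b * prod_list (map J ks) = 1"
  using assms
proof (induction ks)
  case (Cons k ks)
  then obtain b where b: "b * prod_list (map J ks) = 1" by auto
  have "(b * - J k) * prod_list (map J (k # ks)) = b * - (J k * J k) * prod_list (map J ks)"
    by (simp add: mult.assoc)
  also have "\<dots> = 1" using Cons.prems b by simp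
  finally show ?case by blast
qed simp

lemma JK_mult_eq_0_iff:
  fixes J :: "nat \<Rightarrow> 'a::ring_1"
  assumes "finite K" "\<forall>k\<in>K. J k * J k = -1"
  shows "JK J K * c = 0 \<longleftrightarrow> c = 0"
proof
  obtain b where "b * JK J K = 1"
    using prod_list_left_invertible[of "sorted_list_of_set K" J] assms by (auto simp: JK_def)
  then show "JK J K * c = 0 \<Longrightarrow> c = 0" by (metis mult.assoc mult_1_left mult_zero_right)
qed simp

section \<open>The torus\<close>

definition toggle :: "nat \<Rightarrow> nat set \<Rightarrow> nat set" where
  "toggle h K = (if h \<in> K then K - {h} else insert h K)"

lemma sum_Pow_toggle:
  assumes "h \<in> A"
  shows "(\<Sum>K\<in>Pow A. g (toggle h K) K) = (\<Sum>L\<in>Pow A. g L (toggle h L))"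
  by (rule sum.reindex_bij_witness[of _ "toggle h" "toggle h"])
     (use assms in \<open>auto simp: toggle_def insert_absorb\<close>)

lemma betaJ_update:
  assumes "u \<in> {1..\<tau>}"
  shows "betaJ \<tau> (b(u := b u + r)) J = betaJ \<tau> b J + r *\<^sub>R J u"
proof -
  have "betaJ \<tau> (b(u := b u + r)) J = (\<Sum>h=1..\<tau>. b h *\<^sub>R J h + (if h = u then r *\<^sub>R J h else 0))"
    unfolding betaJ_def by (intro sum.cong) (auto simp: scaleR_add_left)
  then show ?thesis using assms by (simp add: sum.distrib betaJ_def)
qed

locale torus_frame = clifford_frame v N for v :: "nat \<Rightarrow> 'a::{real_algebra_1,euclidean_space}" and N +
  fixes t :: "nat \<Rightarrow> nat" and \<tau> :: nat
  assumes t_strict_mono: "strict_mono_on {0..\<tau>} t" and t_last: "t \<tau> = N"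
begin

definition block :: "nat \<Rightarrow> nat set" where
  "block h = {t (h - 1) + 1 .. t h}"

lemma t_le: "i \<le> j \<Longrightarrow> j \<le> \<tau> \<Longrightarrow> t i \<le> t j"
  using t_strict_mono by (auto simp: le_less intro: strict_mono_onD)

lemma t0_le_N: "t 0 \<le> N"
  using t_le[of 0 \<tau>] t_last by simp

lemma block_bounds:
  assumes "h \<in> {1..\<tau>}"
  shows "block h \<subseteq> {1..N}" and "block h \<subseteq> {..N}" and "\<And>s. s \<in> block h \<Longrightarrow> t 0 < s"
    and "t h \<in> block h"
proof -
  have "t (h - 1) < t h" using assms t_strict_mono by (auto intro: strict_mono_onD)
  moreover have "t 0 \<le> t (h - 1)" "t h \<le> N" using assms t_le[of 0 "h - 1"] t_le[of h \<tau>] t_last by auto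
  ultimately show "block h \<subseteq> {1..N}" "block h \<subseteq> {..N}" "\<And>s. s \<in> block h \<Longrightarrow> t 0 < s"
      "t h \<in> block h"
    unfolding block_def by auto
qed

lemma blocks_disjoint:
  assumes "h \<in> {1..\<tau>}" "g \<in> {1..\<tau>}" "h \<noteq> g"
  shows "block h \<inter> block g = {}"
proof -
  have "block a \<inter> block b = {}" if "a \<in> {1..\<tau>}" "b \<in> {1..\<tau>}" "a < b" for a b
  proof -
    have "t a \<le> t (b - 1)" using that t_le[of a "b - 1"] by auto
    then show ?thesis unfolding block_def by auto
  qed
  then show ?thesis using assms by (metis Int_commute linorder_neqE_nat)
qed

lemma torus_component:
  assumes "J \<in> torus v t \<tau>" "h \<in> {1..\<tau>}"
  shows "J h \<in> span (v ` block h)" and "norm (J h) = 1" and "J h \<in> span (v ` {1..N})"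
proof -
  show "J h \<in> span (v ` block h)" "norm (J h) = 1"
    using assms unfolding torus_def Slm_def Rlm_def block_def by auto
  then show "J h \<in> span (v ` {1..N})"
    using span_mono[OF image_mono[OF block_bounds(1)[OF assms(2)]]] by blast
qed

lemma torus_square:
  assumes "J \<in> torus v t \<tau>" "h \<in> {1..\<tau>}"
  shows "J h * J h = -1"
proof -
  have "2 *\<^sub>R (J h * J h) = 2 *\<^sub>R (-1)"
    using anticommutator_frame_span[OF torus_component(3)[OF assms] torus_component(3)[OF assms]]
      torus_component(2)[OF assms] by (simp add: scaleR_2 dot_square_norm)
  then show ?thesis using scaleR_cancel_left[of 2 "J h * J h" "-1"] by simp
qed

lemma torus_anticommute:
  assumes "J \<in> torus v t \<tau>" "h \<in> {1..\<tau>}" "g \<in> {1..\<tau>}" "h \<noteq> g"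
  shows "J h * J g = - (J g * J h)"
proof -
  have "inner (J h) (J g) = 0"
    using inner_disjoint_frame_spans[OF _ _ blocks_disjoint[OF assms(2-4)]
        torus_component(1)[OF assms(1,2)] torus_component(1)[OF assms(1,3)]]
      block_bounds(2)[OF assms(2)] block_bounds(2)[OF assms(3)] by auto
  then show ?thesis
    using anticommutator_frame_span[OF torus_component(3)[OF assms(1,2)] torus_component(3)[OF assms(1,3)]]
    by (simp add: eq_neg_iff_add_eq_0)
qed

lemma frame_torus_anticommute:
  assumes "J \<in> torus v t \<tau>" "h \<in> {1..\<tau>}" "s \<in> {1..t 0}"
  shows "v s * J h = - (J h * v s)"
proof -
  have "s \<notin> block h" "s \<le> N" using block_bounds(3)[OF assms(2), of s] assms(3) t0_le_N by auto
  then have "inner (v s) (J h) = 0"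
    using inner_disjoint_frame_spans[of "{s}" "block h", OF _ block_bounds(2)[OF assms(2)] _ _
        torus_component(1)[OF assms(1,2)]] by (auto intro: span_base)
  moreover have "v s \<in> span (v ` {1..N})" using \<open>s \<le> N\<close> assms(3) by (auto intro: span_base)
  then have "v s * J h + J h * v s = (-2 * inner (v s) (J h)) *\<^sub>R 1"
    by (rule anticommutator_frame_span[OF _ torus_component(3)[OF assms(1,2)]])
  ultimately show ?thesis by (simp add: eq_neg_iff_add_eq_0)
qed

lemma diagonal_in_torus: "(\<lambda>h. v (t h)) \<in> torus v t \<tau>"
  unfolding torus_def Slm_def Rlm_def
proof (intro CollectI ballI conjI)
  fix h assume h: "h \<in> {1..\<tau>}"
  then show "v (t h) \<in> span (v ` {t (h - 1) + 1..t h})"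
    using block_bounds(4) unfolding block_def by (auto intro: span_base)
  show "norm (v (t h)) = 1"
    using frame_orthonormal[of "t h" "t h"] block_bounds(2,4)[OF h] by (auto simp: norm_eq_sqrt_inner)
qed

lemma torus_update_neg: "J \<in> torus v t \<tau> \<Longrightarrow> J(h := - J h) \<in> torus v t \<tau>"
  unfolding torus_def Slm_def Rlm_def by (auto intro: span_neg)

lemma frame_mult_JK:
  assumes "J \<in> torus v t \<tau>" "s \<in> {1..t 0}" "K \<subseteq> {1..\<tau>}"
  shows "v s * JK J K = ((-1::real) ^ card K) *\<^sub>R (JK J K * v s)"
  using assms frame_torus_anticommute by (intro JK_anticommute) (auto intro: finite_subset)

lemma torus_mult_JK:
  assumes "J \<in> torus v t \<tau>" "h \<in> {1..\<tau>}" "L \<subseteq> {1..\<tau>}"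
  shows "J h * JK J L = ((-1::real) ^ (card {k\<in>toggle h L. k \<le> h} + 1)) *\<^sub>R JK J (toggle h L)"
proof -
  have L: "finite L" "\<forall>k\<in>L. k \<noteq> h \<longrightarrow> J h * J k = - (J k * J h)"
    using assms torus_anticommute finite_subset by blast+
  show ?thesis
  proof (cases "h \<in> L")
    case True
    have "{k\<in>toggle h L. k \<le> h} = {k\<in>L. k < h}" using True by (auto simp: toggle_def)
    then show ?thesis
      using J_mult_JK_in[OF L(1) True torus_square[OF assms(1,2)] L(2)] True by (simp add: toggle_def)
  next
    case False
    have "{k\<in>toggle h L. k \<le> h} = insert h {k\<in>L. k < h}" using False by (auto simp: toggle_def)
    moreover have "\<forall>k\<in>L. J h * J k = - (J k * J h)" using L(2) False by auto
    ultimately show ?thesis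
      using J_mult_JK_notin[OF L(1) False] L(1) False by (simp add: toggle_def)
  qed
qed

lemma frame_mult_JK_sum:
  assumes J: "J \<in> torus v t \<tau>"
  shows "(\<Sum>s=0..t 0. v s * (\<Sum>K\<in>Pow {1..\<tau>}. JK J K * A s K))
       = (\<Sum>K\<in>Pow {1..\<tau>}. JK J K * (A 0 K - ((-1::real) ^ (card K + 1)) *\<^sub>R (\<Sum>s=1..t 0. v s * A s K)))"
proof -
  have "(\<Sum>s=0..t 0. v s * JK J K * A s K)
      = JK J K * (A 0 K - ((-1::real) ^ (card K + 1)) *\<^sub>R (\<Sum>s=1..t 0. v s * A s K))"
    if K: "K \<subseteq> {1..\<tau>}" for K
  proof -
    have "(\<Sum>s=1..t 0. v s * JK J K * A s K) = ((-1::real) ^ card K) *\<^sub>R (\<Sum>s=1..t 0. JK J K * (v s * A s K))"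
      unfolding scaleR_sum_right using frame_mult_JK[OF J _ K] by (intro sum.cong) (auto simp: mult.assoc)
    then show ?thesis
      by (simp add: sum.atLeast_Suc_atMost v0 sum_distrib_left ring_distribs)
  qed
  have "(\<Sum>s=0..t 0. v s * (\<Sum>K\<in>Pow {1..\<tau>}. JK J K * A s K))
      = (\<Sum>s=0..t 0. \<Sum>K\<in>Pow {1..\<tau>}. v s * JK J K * A s K)"
    by (simp add: sum_distrib_left mult.assoc)
  also have "\<dots> = (\<Sum>K\<in>Pow {1..\<tau>}. \<Sum>s=0..t 0. v s * JK J K * A s K)"
    by (rule sum.swap)
  also have "\<dots> = (\<Sum>K\<in>Pow {1..\<tau>}. JK J K * (A 0 K - ((-1::real) ^ (card K + 1)) *\<^sub>R (\<Sum>s=1..t 0. v s * A s K)))"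
    using \<open>\<And>K. K \<subseteq> {1..\<tau>} \<Longrightarrow> _\<close> by (intro sum.cong) auto
  finally show ?thesis .
qed

lemma torus_mult_JK_sum:
  assumes J: "J \<in> torus v t \<tau>"
  shows "(\<Sum>u=1..\<tau>. J u * (\<Sum>K\<in>Pow {1..\<tau>}. JK J K * B u K))
       = (\<Sum>K\<in>Pow {1..\<tau>}. JK J K * (\<Sum>h=1..\<tau>. ((-1::real) ^ (card {k\<in>K. k \<le> h} + 1)) *\<^sub>R B h (toggle h K)))"
proof -
  have "J u * (\<Sum>K\<in>Pow {1..\<tau>}. JK J K * B u K)
      = (\<Sum>L\<in>Pow {1..\<tau>}. JK J L * (((-1::real) ^ (card {k\<in>L. k \<le> u} + 1)) *\<^sub>R B u (toggle u L)))"
    if u: "u \<in> {1..\<tau>}" for u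
  proof -
    have "J u * (\<Sum>K\<in>Pow {1..\<tau>}. JK J K * B u K)
        = (\<Sum>K\<in>Pow {1..\<tau>}. JK J (toggle u K) * (((-1::real) ^ (card {k\<in>toggle u K. k \<le> u} + 1)) *\<^sub>R B u K))"
      unfolding sum_distrib_left using torus_mult_JK[OF J u]
      by (intro sum.cong) (auto simp flip: mult.assoc)
    also have "\<dots> = (\<Sum>L\<in>Pow {1..\<tau>}. JK J L * (((-1::real) ^ (card {k\<in>L. k \<le> u} + 1)) *\<^sub>R B u (toggle u L)))"
      using sum_Pow_toggle[OF u, of "\<lambda>L K. JK J L * (((-1::real) ^ (card {k\<in>L. k \<le> u} + 1)) *\<^sub>R B u K)"]
      by simp
    finally show ?thesis .
  qed
  then have "(\<Sum>u=1..\<tau>. J u * (\<Sum>K\<in>Pow {1..\<tau>}. JK J K * B u K))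
      = (\<Sum>u=1..\<tau>. \<Sum>L\<in>Pow {1..\<tau>}. JK J L * (((-1::real) ^ (card {k\<in>L. k \<le> u} + 1)) *\<^sub>R B u (toggle u L)))"
    by (intro sum.cong) auto
  also have "\<dots> = (\<Sum>L\<in>Pow {1..\<tau>}. \<Sum>u=1..\<tau>. JK J L * (((-1::real) ^ (card {k\<in>L. k \<le> u} + 1)) *\<^sub>R B u (toggle u L)))"
    by (rule sum.swap)
  finally show ?thesis by (simp only: sum_distrib_left)
qed

(* Replacing J h by - J h flips the sign of exactly the terms with h \<in> K. *)
lemma JK_sum_parity_parts_eq_0:
  assumes "finite \<K>" "\<forall>K\<in>\<K>. finite K" "\<And>J. J \<in> torus v t \<tau> \<Longrightarrow> (\<Sum>K\<in>\<K>. JK J K * c K) = 0"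
    and J: "J \<in> torus v t \<tau>"
  shows "(\<Sum>K\<in>{K\<in>\<K>. h \<in> K}. JK J K * c K) = 0" and "(\<Sum>K\<in>{K\<in>\<K>. h \<notin> K}. JK J K * c K) = 0"
proof -
  let ?P = "\<lambda>J. \<Sum>K\<in>{K\<in>\<K>. h \<in> K}. JK J K * c K" and ?Q = "\<lambda>J. \<Sum>K\<in>{K\<in>\<K>. h \<notin> K}. JK J K * c K"
  have split: "?P J' + ?Q J' = 0" if "J' \<in> torus v t \<tau>" for J'
  proof -
    have "\<K> = {K\<in>\<K>. h \<in> K} \<union> {K\<in>\<K>. h \<notin> K}" by auto
    then have "(\<Sum>K\<in>\<K>. JK J' K * c K) = ?P J' + ?Q J'"
      using assms(1)
      by (metis (no_types, lifting) sum.union_disjoint finite_Un disjoint_iff mem_Collect_eq)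
    then show ?thesis using assms(3)[OF that] by simp
  qed
  have "?P (J(h := - J h)) = - ?P J" "?Q (J(h := - J h)) = ?Q J"
    using assms(2) by (auto simp: JK_update_neg sum_negf[symmetric] intro!: sum.cong)
  then have "- ?P J + ?Q J = 0"
    using split[OF torus_update_neg[OF J, of h]] by simp
  moreover have "?P J + ?Q J = 0" by (rule split[OF J])
  moreover have "2 *\<^sub>R ?P J = (?P J + ?Q J) - (- ?P J + ?Q J)" by (simp add: scaleR_2)
  ultimately have "2 *\<^sub>R ?P J = 0" by simp
  then show "?P J = 0" "?Q J = 0"
    using \<open>?P J + ?Q J = 0\<close> by simp_all
qed

lemma JK_sum_with_trace_eq_0:
  assumes zero: "\<And>J. J \<in> torus v t \<tau> \<Longrightarrow> (\<Sum>K\<in>Pow {1..\<tau>}. JK J K * c K) = 0"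
    and "S \<subseteq> {1..\<tau>}"
  shows "\<forall>L\<subseteq>S. \<forall>J\<in>torus v t \<tau>. (\<Sum>K\<in>{K\<in>Pow {1..\<tau>}. K \<inter> S = L}. JK J K * c K) = 0"
  using finite_subset[OF assms(2) finite_atLeastAtMost] assms(2)
proof (induction S rule: finite_induct)
  case empty
  have "{K\<in>Pow {1..\<tau>}. K \<inter> {} = L} = Pow {1..\<tau>}" if "L \<subseteq> {}" for L
    using that by auto
  then show ?case using zero by simp
next
  case (insert h S)
  show ?case
  proof (intro allI impI ballI)
    fix L J assume L: "L \<subseteq> insert h S" and J: "J \<in> torus v t \<tau>"
    let ?\<K> = "{K\<in>Pow {1..\<tau>}. K \<inter> S = L - {h}}"
    have fin: "finite ?\<K>" "\<forall>K\<in>?\<K>. finite K" by (auto dest: finite_subset[OF _ finite_atLeastAtMost])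
    have "S \<subseteq> {1..\<tau>}" "L - {h} \<subseteq> S" using insert.prems L by auto
    then have "\<And>J'. J' \<in> torus v t \<tau> \<Longrightarrow> (\<Sum>K\<in>?\<K>. JK J' K * c K) = 0"
      using insert.IH by simp
    note parts = JK_sum_parity_parts_eq_0[OF fin this J, of h]
    have "K \<inter> insert h S = L \<longleftrightarrow> K \<inter> S = L - {h} \<and> (h \<in> K \<longleftrightarrow> h \<in> L)" for K
      using insert.hyps(2) L by blast
    then show "(\<Sum>K\<in>{K\<in>Pow {1..\<tau>}. K \<inter> insert h S = L}. JK J K * c K) = 0"
      using parts by (cases "h \<in> L") (simp_all cong: conj_cong)
  qed
qed

lemma JK_sum_eq_0_imp_coeff_eq_0:
  assumes zero: "\<And>J. J \<in> torus v t \<tau> \<Longrightarrow> (\<Sum>K\<in>Pow {1..\<tau>}. JK J K * c K) = 0"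
    and K0: "K0 \<subseteq> {1..\<tau>}"
  shows "c K0 = 0"
proof -
  have "(\<Sum>K\<in>{K\<in>Pow {1..\<tau>}. K \<inter> {1..\<tau>} = K0}. JK (\<lambda>h. v (t h)) K * c K) = 0"
    using JK_sum_with_trace_eq_0[OF zero order_refl] K0 diagonal_in_torus by blast
  moreover have "{K\<in>Pow {1..\<tau>}. K \<inter> {1..\<tau>} = K0} = {K0}" using K0 by auto
  ultimately have "JK (\<lambda>h. v (t h)) K0 * c K0 = 0" by simp
  moreover have "finite K0" using K0 by (rule finite_subset) simp
  moreover have "\<forall>k\<in>K0. v (t k) * v (t k) = -1" using K0 torus_square[OF diagonal_in_torus] by auto
  ultimately show ?thesis using JK_mult_eq_0_iff[of K0 "\<lambda>h. v (t h)" "c K0"] by simp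
qed

definition block_proj :: "nat \<Rightarrow> 'a \<Rightarrow> 'a" where
  "block_proj h y = (\<Sum>s\<in>block h. inner y (v s) *\<^sub>R v s)"

lemma block_proj_slice_point:
  assumes J: "J \<in> torus v t \<tau>" and h: "h \<in> {1..\<tau>}" and a: "a \<in> span (v ` {0..t 0})"
  shows "block_proj h (a + betaJ \<tau> b J) = b h *\<^sub>R J h"
proof -
  have lin: "linear (block_proj h)"
    unfolding block_proj_def
    by (rule linearI) (simp_all add: inner_add_left scaleR_add_left sum.distrib scaleR_sum_right)
  have orth: "block_proj h y = 0" if "y \<in> span (v ` S)" "S \<subseteq> {..N}" "S \<inter> block h = {}" for y S
  proof -
    have "inner y (v s) = 0" if "s \<in> block h" for s
      using inner_disjoint_frame_spans[OF \<open>S \<subseteq> {..N}\<close>, of "{s}" y "v s"] \<open>y \<in> span (v ` S)\<close>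
        \<open>S \<inter> block h = {}\<close> that block_bounds(2)[OF h] by (auto intro: span_base)
    then show ?thesis by (simp add: block_proj_def)
  qed
  have "block_proj h (J g) = (if g = h then J h else 0)" if g: "g \<in> {1..\<tau>}" for g
    using frame_span_expansion[OF _ block_bounds(2)[OF h] torus_component(1)[OF J h]]
      orth[OF torus_component(1)[OF J g] block_bounds(2)[OF g] blocks_disjoint[OF g h]]
    by (auto simp: block_proj_def block_def)
  then have "(\<Sum>g=1..\<tau>. b g *\<^sub>R block_proj h (J g)) = (\<Sum>g=1..\<tau>. if g = h then b h *\<^sub>R J h else 0)"
    by (intro sum.cong) auto
  moreover have "block_proj h a = 0"
    using orth[OF a] t0_le_N block_bounds(3)[OF h] by force
  ultimately show ?thesis
    using h by (simp add: betaJ_def linear_add[OF lin] linear_sum[OF lin] linear_scale[OF lin])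
qed

end

section \<open>Calculus\<close>

lemma continuous_values_meeting_near_eq:
  fixes f g :: "'a::metric_space \<Rightarrow> 'b::metric_space"
  assumes f: "continuous (at x) f" and g: "continuous (at x) g"
    and meet: "\<And>\<delta>. \<delta> > 0 \<Longrightarrow> \<exists>p q. dist p x < \<delta> \<and> dist q x < \<delta> \<and> f p = g q"
  shows "f x = g x"
proof (rule ccontr)
  assume "f x \<noteq> g x"
  define \<epsilon> where "\<epsilon> = dist (f x) (g x) / 2"
  have "\<epsilon> > 0" using \<open>f x \<noteq> g x\<close> by (simp add: \<epsilon>_def)
  obtain d1 where d1: "d1 > 0" "\<And>p. dist p x < d1 \<Longrightarrow> dist (f p) (f x) < \<epsilon>"
    using f \<open>\<epsilon> > 0\<close> unfolding continuous_at_eps_delta by blast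
  obtain d2 where d2: "d2 > 0" "\<And>q. dist q x < d2 \<Longrightarrow> dist (g q) (g x) < \<epsilon>"
    using g \<open>\<epsilon> > 0\<close> unfolding continuous_at_eps_delta by blast
  obtain p q where pq: "dist p x < min d1 d2" "dist q x < min d1 d2" "f p = g q"
    using meet[of "min d1 d2"] d1(1) d2(1) by auto
  have "dist (f x) (g x) \<le> dist (f p) (f x) + dist (g q) (g x)"
    using dist_triangle3[of "f x" "g x" "f p"] pq(3) by (simp only: dist_commute)
  also have "\<dots> < 2 * \<epsilon>" using d1(2)[of p] d2(2)[of q] pq(1,2) by simp
  finally show False by (simp add: \<epsilon>_def)
qed

lemma double_difference_mean_value:
  fixes \<phi> \<phi>\<^sub>1 \<phi>\<^sub>1\<^sub>2 :: "real \<Rightarrow> real \<Rightarrow> real"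
  assumes "0 < h"
    and d1: "\<And>x y. x \<in> {0..h} \<Longrightarrow> y \<in> {0..h} \<Longrightarrow> ((\<lambda>x. \<phi> x y) has_real_derivative \<phi>\<^sub>1 x y) (at x)"
    and d12: "\<And>x y. x \<in> {0..h} \<Longrightarrow> y \<in> {0..h} \<Longrightarrow> ((\<lambda>y. \<phi>\<^sub>1 x y) has_real_derivative \<phi>\<^sub>1\<^sub>2 x y) (at y)"
  shows "\<exists>\<xi> \<eta>. \<xi> \<in> {0<..<h} \<and> \<eta> \<in> {0<..<h} \<and> \<phi> h h - \<phi> h 0 - \<phi> 0 h + \<phi> 0 0 = h * h * \<phi>\<^sub>1\<^sub>2 \<xi> \<eta>"
proof -
  have dx: "((\<lambda>x. \<phi> x h - \<phi> x 0) has_real_derivative \<phi>\<^sub>1 x h - \<phi>\<^sub>1 x 0) (at x)" if "0 \<le> x" "x \<le> h" for x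
    using that \<open>0 < h\<close> by (intro derivative_intros d1) auto
  obtain \<xi> where \<xi>: "0 < \<xi>" "\<xi> < h"
    "(\<phi> h h - \<phi> h 0) - (\<phi> 0 h - \<phi> 0 0) = (h - 0) * (\<phi>\<^sub>1 \<xi> h - \<phi>\<^sub>1 \<xi> 0)"
    using MVT2[OF \<open>0 < h\<close> dx] by auto
  have dy: "((\<lambda>y. \<phi>\<^sub>1 \<xi> y) has_real_derivative \<phi>\<^sub>1\<^sub>2 \<xi> y) (at y)" if "0 \<le> y" "y \<le> h" for y
    using that \<xi> by (intro d12) auto
  obtain \<eta> where \<eta>: "0 < \<eta>" "\<eta> < h" "\<phi>\<^sub>1 \<xi> h - \<phi>\<^sub>1 \<xi> 0 = (h - 0) * \<phi>\<^sub>1\<^sub>2 \<xi> \<eta>"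
    using MVT2[OF \<open>0 < h\<close> dy] by auto
  show ?thesis using \<xi> \<eta> by (intro exI[of _ \<xi>] exI[of _ \<eta>]) (simp add: algebra_simps)
qed

lemma mixed_partials_values_meet:
  fixes \<phi> \<phi>\<^sub>1 \<phi>\<^sub>2 \<phi>\<^sub>1\<^sub>2 \<phi>\<^sub>2\<^sub>1 :: "real \<Rightarrow> real \<Rightarrow> real"
  assumes "e > 0" "\<delta> > 0"
    and d1: "\<And>x y. \<bar>x\<bar> < e \<Longrightarrow> \<bar>y\<bar> < e \<Longrightarrow> ((\<lambda>x. \<phi> x y) has_real_derivative \<phi>\<^sub>1 x y) (at x)"
    and d2: "\<And>x y. \<bar>x\<bar> < e \<Longrightarrow> \<bar>y\<bar> < e \<Longrightarrow> ((\<lambda>y. \<phi> x y) has_real_derivative \<phi>\<^sub>2 x y) (at y)"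
    and d12: "\<And>x y. \<bar>x\<bar> < e \<Longrightarrow> \<bar>y\<bar> < e \<Longrightarrow> ((\<lambda>y. \<phi>\<^sub>1 x y) has_real_derivative \<phi>\<^sub>1\<^sub>2 x y) (at y)"
    and d21: "\<And>x y. \<bar>x\<bar> < e \<Longrightarrow> \<bar>y\<bar> < e \<Longrightarrow> ((\<lambda>x. \<phi>\<^sub>2 x y) has_real_derivative \<phi>\<^sub>2\<^sub>1 x y) (at x)"
  shows "\<exists>p q. dist p (0, 0) < \<delta> \<and> dist q (0, 0) < \<delta> \<and> \<phi>\<^sub>1\<^sub>2 (fst p) (snd p) = \<phi>\<^sub>2\<^sub>1 (fst q) (snd q)"
proof -
  define h where "h = min e \<delta> / 2"
  have h: "0 < h" "h < e" "2 * h \<le> \<delta>" using assms(1,2) by (auto simp: h_def)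
  have small: "\<bar>x\<bar> < e" if "x \<in> {0..h}" for x using that h by auto
  \<comment> \<open>both mixed partials compute the same double difference over the square \<open>[0, h]\<^sup>2\<close>\<close>
  have "\<exists>\<xi> \<eta>. \<xi> \<in> {0<..<h} \<and> \<eta> \<in> {0<..<h} \<and> \<phi> h h - \<phi> h 0 - \<phi> 0 h + \<phi> 0 0 = h * h * \<phi>\<^sub>1\<^sub>2 \<xi> \<eta>"
    using double_difference_mean_value[OF h(1) d1[OF small small] d12[OF small small]] .
  moreover have "\<exists>\<eta> \<xi>. \<eta> \<in> {0<..<h} \<and> \<xi> \<in> {0<..<h} \<and> \<phi> h h - \<phi> 0 h - \<phi> h 0 + \<phi> 0 0 = h * h * \<phi>\<^sub>2\<^sub>1 \<xi> \<eta>"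
  proof (rule double_difference_mean_value[of h "\<lambda>y x. \<phi> x y" "\<lambda>y x. \<phi>\<^sub>2 x y" "\<lambda>y x. \<phi>\<^sub>2\<^sub>1 x y", OF h(1)])
    fix y x :: real assume "y \<in> {0..h}" "x \<in> {0..h}"
    then show "((\<lambda>y. \<phi> x y) has_real_derivative \<phi>\<^sub>2 x y) (at y)"
      and "((\<lambda>x. \<phi>\<^sub>2 x y) has_real_derivative \<phi>\<^sub>2\<^sub>1 x y) (at x)"
      using d2[OF small small] d21[OF small small] by auto
  qed
  ultimately obtain \<xi> \<eta> \<xi>' \<eta>' where pts: "\<xi> \<in> {0<..<h}" "\<eta> \<in> {0<..<h}" "\<xi>' \<in> {0<..<h}" "\<eta>' \<in> {0<..<h}"
    and "\<phi> h h - \<phi> h 0 - \<phi> 0 h + \<phi> 0 0 = h * h * \<phi>\<^sub>1\<^sub>2 \<xi> \<eta>"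
    and "\<phi> h h - \<phi> 0 h - \<phi> h 0 + \<phi> 0 0 = h * h * \<phi>\<^sub>2\<^sub>1 \<xi>' \<eta>'"
    by blast
  then have "h * h * \<phi>\<^sub>1\<^sub>2 \<xi> \<eta> = h * h * \<phi>\<^sub>2\<^sub>1 \<xi>' \<eta>'" by linarith
  then have "\<phi>\<^sub>1\<^sub>2 \<xi> \<eta> = \<phi>\<^sub>2\<^sub>1 \<xi>' \<eta>'" using h by simp
  moreover have near: "dist (a, b) (0, 0) < \<delta>" if "a \<in> {0<..<h}" "b \<in> {0<..<h}" for a b :: real
  proof -
    have "dist (a, b) (0, 0) \<le> \<bar>a\<bar> + \<bar>b\<bar>" using norm_Pair_le[of a b] by (simp add: dist_norm)
    then show ?thesis using that h by auto
  qed
  ultimately show ?thesis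
    using pts near[of \<xi> \<eta>] near[of \<xi>' \<eta>'] by (intro exI[of _ "(\<xi>, \<eta>)"] exI[of _ "(\<xi>', \<eta>')"]) simp
qed

lemma mixed_partials_commute:
  fixes \<phi> \<phi>\<^sub>1 \<phi>\<^sub>2 \<phi>\<^sub>1\<^sub>2 \<phi>\<^sub>2\<^sub>1 :: "real \<Rightarrow> real \<Rightarrow> real"
  assumes "e > 0"
    and "\<And>x y. \<bar>x\<bar> < e \<Longrightarrow> \<bar>y\<bar> < e \<Longrightarrow> ((\<lambda>x. \<phi> x y) has_real_derivative \<phi>\<^sub>1 x y) (at x)"
    and "\<And>x y. \<bar>x\<bar> < e \<Longrightarrow> \<bar>y\<bar> < e \<Longrightarrow> ((\<lambda>y. \<phi> x y) has_real_derivative \<phi>\<^sub>2 x y) (at y)"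
    and "\<And>x y. \<bar>x\<bar> < e \<Longrightarrow> \<bar>y\<bar> < e \<Longrightarrow> ((\<lambda>y. \<phi>\<^sub>1 x y) has_real_derivative \<phi>\<^sub>1\<^sub>2 x y) (at y)"
    and "\<And>x y. \<bar>x\<bar> < e \<Longrightarrow> \<bar>y\<bar> < e \<Longrightarrow> ((\<lambda>x. \<phi>\<^sub>2 x y) has_real_derivative \<phi>\<^sub>2\<^sub>1 x y) (at x)"
    and c12: "continuous (at (0, 0)) (\<lambda>p. \<phi>\<^sub>1\<^sub>2 (fst p) (snd p))"
    and c21: "continuous (at (0, 0)) (\<lambda>p. \<phi>\<^sub>2\<^sub>1 (fst p) (snd p))"
  shows "\<phi>\<^sub>1\<^sub>2 0 0 = \<phi>\<^sub>2\<^sub>1 0 0"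
  using continuous_values_meeting_near_eq[OF c12 c21 mixed_partials_values_meet[OF assms(1) _ assms(2-5)]]
  by simp

lemma eventually_nhds_in_openin:
  assumes "openin (top_of_set S) D" "continuous (at x) P" "\<And>y. P y \<in> S" "P x \<in> D"
  shows "\<forall>\<^sub>F y in nhds x. P y \<in> D"
proof -
  obtain T where T: "open T" "D = S \<inter> T" using assms(1) by (auto simp: openin_open)
  then obtain U where "open U" "x \<in> U" "\<forall>y\<in>U. P y \<in> T"
    using assms(2,4) unfolding continuous_at_open by blast
  then show ?thesis using T assms(3) unfolding eventually_nhds by blast
qed

lemma continuous_at_update_shift:
  "continuous (at x) (\<lambda>r::real. (a, (b::nat \<Rightarrow> real)(u := b u + r)))"
proof -
  have "continuous_on UNIV (\<lambda>r::real. b(u := b u + r))"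
  proof (rule continuous_on_coordinatewise_then_product)
    show "continuous_on UNIV (\<lambda>r. (b(u := b u + r)) i)" for i
      by (cases "i = u") (simp_all add: continuous_on_add)
  qed
  then show ?thesis by (simp add: continuous_on_eq_continuous_at)
qed

lemma bounded_linear_mult_left_euclidean:
  "bounded_linear (\<lambda>x::'a::{real_algebra_1,euclidean_space}. c * x)"
  unfolding linear_conv_bounded_linear[symmetric] by (rule linearI) (simp_all add: distrib_left)

lemma has_vector_derivative_sum_mult_cong:
  fixes g :: "real \<Rightarrow> 'a::{real_algebra_1,euclidean_space}"
  assumes "finite I" "\<forall>\<^sub>F r in nhds x. g r = (\<Sum>K\<in>I. c K * G K r)"
    and "\<And>K. K \<in> I \<Longrightarrow> (G K has_vector_derivative G' K) (at x)"
  shows "(g has_vector_derivative (\<Sum>K\<in>I. c K * G' K)) (at x)"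
proof -
  have "((\<lambda>r. \<Sum>K\<in>I. c K * G K r) has_vector_derivative (\<Sum>K\<in>I. c K * G' K)) (at x)"
    using assms(3)
    by (intro has_vector_derivative_sum bounded_linear.has_vector_derivative[OF bounded_linear_mult_left_euclidean])
  moreover have "(g has_vector_derivative L) (at x within UNIV)
      \<longleftrightarrow> ((\<lambda>r. \<Sum>K\<in>I. c K * G K r) has_vector_derivative L) (at x within UNIV)" for L
    by (rule has_vector_derivative_cong_ev) (use assms(2) eventually_nhds_x_imp_x[OF assms(2)] in auto)
  ultimately show ?thesis by simp
qed

lemma hasd_dd_if_has_vector_derivative:
  assumes "((\<lambda>r. f (x + r *\<^sub>R w)) has_vector_derivative L) (at 0)"
  shows "hasd f w x" and "dd f w x = L"
  using assms unfolding hasd_def dd_def by (auto intro: differentiableI_vector vector_derivative_at)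

lemma hasA_has_vector_derivative:
  "hasA v s G (a, b) \<Longrightarrow> ((\<lambda>r. G (a + r *\<^sub>R v s, b)) has_vector_derivative dA v s G (a, b)) (at 0)"
  unfolding hasA_def dA_def by (simp add: vector_derivative_works)

lemma hasB_has_vector_derivative:
  "hasB h G (a, b) \<Longrightarrow> ((\<lambda>r. G (a, b(h := b h + r))) has_vector_derivative dB h G (a, b)) (at 0)"
  unfolding hasB_def dB_def by (simp add: vector_derivative_works)

lemma hasA_real_derivative_inner:
  assumes "hasA v s H (p x, \<beta>)" and "\<And>\<rho>. p (x + \<rho>) = p x + \<rho> *\<^sub>R v s"
  shows "((\<lambda>x. inner (H (p x, \<beta>)) i) has_real_derivative inner (dA v s H (p x, \<beta>)) i) (at x)"
proof -
  have "((\<lambda>\<rho>. inner (H (p x + \<rho> *\<^sub>R v s, \<beta>)) i) has_vector_derivative inner (dA v s H (p x, \<beta>)) i) (at 0)"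
    by (rule bounded_linear.has_vector_derivative[OF bounded_linear_inner_left
          hasA_has_vector_derivative[OF assms(1)]])
  then have "((\<lambda>\<rho>. inner (H (p (\<rho> + x), \<beta>)) i) has_real_derivative inner (dA v s H (p x, \<beta>)) i) (at 0)"
    using assms(2) by (simp add: has_real_derivative_iff_has_vector_derivative add.commute)
  then show ?thesis using DERIV_shift[of "\<lambda>x. inner (H (p x, \<beta>)) i" _ 0 x] by simp
qed

lemma dA_diff_scaleR_sum:
  fixes H0 :: "'a::{real_algebra_1,euclidean_space} stempt \<Rightarrow> 'a"
  assumes "finite R" "hasA v s H0 z" "\<And>r. r \<in> R \<Longrightarrow> hasA v s (H r) z"
  shows "dA v s (\<lambda>z. H0 z - c *\<^sub>R (\<Sum>r\<in>R. w r * H r z)) z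
       = dA v s H0 z - c *\<^sub>R (\<Sum>r\<in>R. w r * dA v s (H r) z)"
proof -
  obtain a b where z: "z = (a, b)" by (cases z)
  have "((\<lambda>x. H0 (a + x *\<^sub>R v s, b) - c *\<^sub>R (\<Sum>r\<in>R. w r * H r (a + x *\<^sub>R v s, b))) has_vector_derivative
      dA v s H0 (a, b) - c *\<^sub>R (\<Sum>r\<in>R. w r * dA v s (H r) (a, b))) (at 0)"
    using assms unfolding z
    by (intro has_vector_derivative_diff has_vector_derivative_sum hasA_has_vector_derivative
        bounded_linear.has_vector_derivative[OF bounded_linear_scaleR_right]
        bounded_linear.has_vector_derivative[OF bounded_linear_mult_left_euclidean]) auto
  then show ?thesis unfolding z dA_def by (simp add: vector_derivative_at)
qed

lemma Cp_SucD:
  assumes "Cp v t0 \<tau> D (Suc p) G"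
  shows "continuous_on D G"
    and "s \<in> {0..t0} \<Longrightarrow> z \<in> D \<Longrightarrow> hasA v s G z" and "s \<in> {0..t0} \<Longrightarrow> Cp v t0 \<tau> D p (dA v s G)"
    and "h \<in> {1..\<tau>} \<Longrightarrow> z \<in> D \<Longrightarrow> hasB h G z" and "h \<in> {1..\<tau>} \<Longrightarrow> Cp v t0 \<tau> D p (dB h G)"
  using assms by auto

section \<open>Induced functions on a stem domain\<close>

locale stem_domain = torus_frame v N t \<tau> for v :: "nat \<Rightarrow> 'a::{real_algebra_1,euclidean_space}" and N t \<tau> +
  fixes D :: "'a stempt set"
  assumes D_open: "openin (top_of_set (Rlm v 0 (t 0) \<times> Rtau \<tau>)) D"
    and D_reflection: "\<And>\<alpha> \<beta> h. (\<alpha>, \<beta>) \<in> D \<Longrightarrow> h \<in> {1..\<tau>} \<Longrightarrow> (\<alpha>, flip h \<beta>) \<in> D"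
begin

lemma D_subset: "(a, b) \<in> D \<Longrightarrow> a \<in> span (v ` {0..t 0}) \<and> b \<in> Rtau \<tau>"
  using openin_subset[OF D_open] by (auto simp: Rlm_def)

lemma D_sign_changes:
  assumes "(a, b) \<in> D" "S \<subseteq> {1..\<tau>}"
  shows "(a, \<lambda>h. if h \<in> S then - b h else b h) \<in> D"
  using finite_subset[OF assms(2) finite_atLeastAtMost] assms(2)
proof (induction S rule: finite_induct)
  case (insert h S)
  have "(\<lambda>i. if i \<in> insert h S then - b i else b i) = flip h (\<lambda>i. if i \<in> S then - b i else b i)"
    using insert.hyps(2) by (auto simp: flip_def)
  then show ?case using D_reflection insert by simp
qed (use assms(1) in simp)

lemma slice_points:
  assumes J: "J \<in> torus v t \<tau>"
  shows "OmegaD v t \<tau> D \<inter> RJ v (t 0) \<tau> J = {a + betaJ \<tau> b J | a b. (a, b) \<in> D}"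
proof (intro set_eqI iffI)
  fix x assume "x \<in> OmegaD v t \<tau> D \<inter> RJ v (t 0) \<tau> J"
  then obtain a b' J' y z where ab': "(a, b') \<in> D" "J' \<in> torus v t \<tau>" "x = a + betaJ \<tau> b' J'"
    and y: "y \<in> span (v ` {0..t 0})" and z: "z \<in> span (J ` {1..\<tau>})" and "x = y + z"
    unfolding OmegaD_def RJ_def span_Un by blast
  obtain c where "z = betaJ \<tau> c J"
    using span_image_finite_sum[OF finite_atLeastAtMost z] unfolding betaJ_def by blast
  with \<open>x = y + z\<close> have x: "x = y + betaJ \<tau> c J" by simp
  \<comment> \<open>blockwise \<open>b' h J' h = c h J h\<close>, so \<open>J' h = - J h\<close> where the terms differ;
     flip those signs of \<open>b'\<close>\<close>
  define S where "S = {h\<in>{1..\<tau>}. b' h *\<^sub>R J' h \<noteq> b' h *\<^sub>R J h}"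
  define b where "b h = (if h \<in> S then - b' h else b' h)" for h
  have "b h *\<^sub>R J h = b' h *\<^sub>R J' h" if h: "h \<in> {1..\<tau>}" for h
  proof -
    have "b' h *\<^sub>R J' h = block_proj h x"
      using block_proj_slice_point[OF ab'(2) h] D_subset[OF ab'(1)] ab'(3) by simp
    moreover have "c h *\<^sub>R J h = block_proj h x"
      using block_proj_slice_point[OF J h y] x by simp
    ultimately have "b' h *\<^sub>R J' h = b' h *\<^sub>R J h \<or> J' h = - J h"
      using scaled_unit_vectors_eq torus_component(2)[OF ab'(2) h] torus_component(2)[OF J h] by metis
    then show ?thesis using h by (cases "h \<in> S") (auto simp: b_def S_def)
  qed
  then have "x = a + betaJ \<tau> b J" using ab'(3) by (simp add: betaJ_def)
  moreover have "(a, b) \<in> D" unfolding b_def by (rule D_sign_changes[OF ab'(1)]) (auto simp: S_def)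
  ultimately show "x \<in> {a + betaJ \<tau> b J | a b. (a, b) \<in> D}" by blast
next
  fix x assume "x \<in> {a + betaJ \<tau> b J | a b. (a, b) \<in> D}"
  then obtain a b where ab: "(a, b) \<in> D" "x = a + betaJ \<tau> b J" by blast
  let ?S = "v ` {0..t 0} \<union> J ` {1..\<tau>}"
  have "a \<in> span ?S" using D_subset[OF ab(1)] span_mono[of "v ` {0..t 0}" ?S] by blast
  moreover have "betaJ \<tau> b J \<in> span ?S"
    unfolding betaJ_def by (intro span_sum span_scale span_base) auto
  ultimately show "x \<in> OmegaD v t \<tau> D \<inter> RJ v (t 0) \<tau> J"
    using ab J unfolding OmegaD_def RJ_def by (auto intro: span_add)
qed

lemma eventually_frame_line_in_D:
  assumes "(a, b) \<in> D" "s \<in> {0..t 0}"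
  shows "\<forall>\<^sub>F r in nhds 0. (a + r *\<^sub>R v s, b) \<in> D"
proof (rule eventually_nhds_in_openin[OF D_open])
  fix r :: real
  show "(a + r *\<^sub>R v s, b) \<in> Rlm v 0 (t 0) \<times> Rtau \<tau>"
    using D_subset[OF assms(1)] span_base[of "v s" "v ` {0..t 0}"] assms(2)
    unfolding Rlm_def by (auto intro!: span_add span_scale)
qed (use assms(1) in \<open>simp_all add: continuous_intros\<close>)

lemma eventually_beta_line_in_D:
  assumes "(a, b) \<in> D" "u \<in> {1..\<tau>}"
  shows "\<forall>\<^sub>F r in nhds 0. (a, b(u := b u + r)) \<in> D"
proof (rule eventually_nhds_in_openin[OF D_open continuous_at_update_shift])
  fix r :: real
  show "(a, b(u := b u + r)) \<in> Rlm v 0 (t 0) \<times> Rtau \<tau>"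
    using D_subset[OF assms(1)] assms(2) unfolding Rlm_def Rtau_def by auto
qed (use assms(1) in simp)

lemma eventually_frame_plane_in_D:
  assumes "(a, b) \<in> D" "s \<in> {0..t 0}" "r \<in> {0..t 0}"
  shows "\<forall>\<^sub>F p in nhds (0, 0). (a + fst p *\<^sub>R v s + snd p *\<^sub>R v r, b) \<in> D"
proof (rule eventually_nhds_in_openin[OF D_open])
  fix p :: "real \<times> real"
  show "(a + fst p *\<^sub>R v s + snd p *\<^sub>R v r, b) \<in> Rlm v 0 (t 0) \<times> Rtau \<tau>"
    using D_subset[OF assms(1)] span_base[of "v s" "v ` {0..t 0}"] span_base[of "v r" "v ` {0..t 0}"]
      assms(2,3)
    unfolding Rlm_def by (auto intro!: span_add span_scale)
qed (use assms(1) in \<open>simp_all add: continuous_intros\<close>)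

lemma slice_frame_derivative:
  assumes ind: "\<forall>a b. (a, b) \<in> D \<longrightarrow> f (a + betaJ \<tau> b J) = (\<Sum>K\<in>Pow {1..\<tau>}. JK J K * F K (a, b))"
    and ab: "(a, b) \<in> D" and s: "s \<in> {0..t 0}" and F: "\<forall>K. K \<subseteq> {1..\<tau>} \<longrightarrow> hasA v s (F K) (a, b)"
  shows "hasd f (v s) (a + betaJ \<tau> b J)"
    and "dd f (v s) (a + betaJ \<tau> b J) = (\<Sum>K\<in>Pow {1..\<tau>}. JK J K * dA v s (F K) (a, b))"
proof -
  have "((\<lambda>r. f (a + betaJ \<tau> b J + r *\<^sub>R v s)) has_vector_derivative
      (\<Sum>K\<in>Pow {1..\<tau>}. JK J K * dA v s (F K) (a, b))) (at 0)"
  proof (rule has_vector_derivative_sum_mult_cong)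
    show "\<forall>\<^sub>F r in nhds 0. f (a + betaJ \<tau> b J + r *\<^sub>R v s) = (\<Sum>K\<in>Pow {1..\<tau>}. JK J K * F K (a + r *\<^sub>R v s, b))"
      using eventually_frame_line_in_D[OF ab s]
    proof eventually_elim
      case (elim r)
      then show ?case using ind[rule_format, OF elim] by (simp add: algebra_simps)
    qed
  next
    fix K assume "K \<in> Pow {1..\<tau>}"
    then show "((\<lambda>r. F K (a + r *\<^sub>R v s, b)) has_vector_derivative dA v s (F K) (a, b)) (at 0)"
      using F by (intro hasA_has_vector_derivative) auto
  qed simp
  then show "hasd f (v s) (a + betaJ \<tau> b J)"
    and "dd f (v s) (a + betaJ \<tau> b J) = (\<Sum>K\<in>Pow {1..\<tau>}. JK J K * dA v s (F K) (a, b))"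
    by (rule hasd_dd_if_has_vector_derivative)+
qed

lemma slice_torus_derivative:
  assumes ind: "\<forall>a b. (a, b) \<in> D \<longrightarrow> f (a + betaJ \<tau> b J) = (\<Sum>K\<in>Pow {1..\<tau>}. JK J K * F K (a, b))"
    and ab: "(a, b) \<in> D" and u: "u \<in> {1..\<tau>}" and F: "\<forall>K. K \<subseteq> {1..\<tau>} \<longrightarrow> hasB u (F K) (a, b)"
  shows "hasd f (J u) (a + betaJ \<tau> b J)"
    and "dd f (J u) (a + betaJ \<tau> b J) = (\<Sum>K\<in>Pow {1..\<tau>}. JK J K * dB u (F K) (a, b))"
proof -
  have "((\<lambda>r. f (a + betaJ \<tau> b J + r *\<^sub>R J u)) has_vector_derivative
      (\<Sum>K\<in>Pow {1..\<tau>}. JK J K * dB u (F K) (a, b))) (at 0)"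
  proof (rule has_vector_derivative_sum_mult_cong)
    show "\<forall>\<^sub>F r in nhds 0. f (a + betaJ \<tau> b J + r *\<^sub>R J u) = (\<Sum>K\<in>Pow {1..\<tau>}. JK J K * F K (a, b(u := b u + r)))"
      using eventually_beta_line_in_D[OF ab u]
    proof eventually_elim
      case (elim r)
      then show ?case using ind[rule_format, OF elim] by (simp add: betaJ_update[OF u] add.assoc)
    qed
  next
    fix K assume "K \<in> Pow {1..\<tau>}"
    then show "((\<lambda>r. F K (a, b(u := b u + r))) has_vector_derivative dB u (F K) (a, b)) (at 0)"
      using F by (intro hasB_has_vector_derivative) auto
  qed simp
  then show "hasd f (J u) (a + betaJ \<tau> b J)"
    and "dd f (J u) (a + betaJ \<tau> b J) = (\<Sum>K\<in>Pow {1..\<tau>}. JK J K * dB u (F K) (a, b))"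
    by (rule hasd_dd_if_has_vector_derivative)+
qed

lemma frame_plane_chart:
  assumes "(\<alpha>, \<beta>) \<in> D" "s \<in> {0..t 0}" "r \<in> {0..t 0}"
  obtains e where "e > 0"
    and "\<And>x y. \<bar>x\<bar> < e \<Longrightarrow> \<bar>y\<bar> < e \<Longrightarrow> (\<alpha> + x *\<^sub>R v s + y *\<^sub>R v r, \<beta>) \<in> D"
proof -
  obtain d where "d > 0" and d: "\<forall>q. dist q (0, 0) < d \<longrightarrow> (\<alpha> + fst q *\<^sub>R v s + snd q *\<^sub>R v r, \<beta>) \<in> D"
    using eventually_frame_plane_in_D[OF assms] by (subst (asm) eventually_nhds_metric) blast
  show ?thesis
  proof
    show "d / 2 > 0" using \<open>d > 0\<close> by simp
    fix x y :: real assume "\<bar>x\<bar> < d / 2" "\<bar>y\<bar> < d / 2"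
    moreover have "dist (x, y) (0, 0) \<le> \<bar>x\<bar> + \<bar>y\<bar>" using norm_Pair_le[of x y] by (simp add: dist_norm)
    ultimately show "(\<alpha> + x *\<^sub>R v s + y *\<^sub>R v r, \<beta>) \<in> D" using d[rule_format, of "(x, y)"] by simp
  qed
qed

lemma continuous_at_frame_plane:
  fixes H :: "'a stempt \<Rightarrow> 'b::real_normed_vector"
  assumes "continuous_on D H" "e > 0"
    and inD: "\<And>x y. \<bar>x\<bar> < e \<Longrightarrow> \<bar>y\<bar> < e \<Longrightarrow> (\<alpha> + x *\<^sub>R v s + y *\<^sub>R v r, \<beta>) \<in> D"
  shows "continuous (at (0, 0)) (\<lambda>q. H (\<alpha> + fst q *\<^sub>R v s + snd q *\<^sub>R v r, \<beta>))"
proof -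
  let ?P = "\<lambda>q::real \<times> real. (\<alpha> + fst q *\<^sub>R v s + snd q *\<^sub>R v r, \<beta>)"
  have "continuous_on (ball (0, 0) e) ?P" by (intro continuous_intros)
  moreover have "?P ` ball (0, 0) e \<subseteq> D"
  proof (rule image_subsetI)
    fix q :: "real \<times> real" assume "q \<in> ball (0, 0) e"
    moreover obtain x y where q: "q = (x, y)" by fastforce
    ultimately have "dist (x, y) (0, 0) < e" by (simp add: dist_commute)
    then have "norm (x, y) < e" by (simp add: dist_norm)
    moreover have "\<bar>x\<bar> \<le> norm (x, y)" "\<bar>y\<bar> \<le> norm (x, y)"
      using norm_fst_le[where x = x and y = y] norm_snd_le[where x = x and y = y] by simp_all
    ultimately have "\<bar>x\<bar> < e" "\<bar>y\<bar> < e" by linarith+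
    then show "?P q \<in> D" using inD q by simp
  qed
  ultimately have "continuous_on (ball (0, 0) e) (\<lambda>q. H (?P q))"
    using continuous_on_compose2[OF assms(1)] by blast
  then show ?thesis using \<open>e > 0\<close> by (simp add: continuous_on_eq_continuous_at)
qed

lemma dA_dA_commute:
  fixes G :: "'a stempt \<Rightarrow> 'b::euclidean_space"
  assumes z: "z \<in> D" and s: "s \<in> {0..t 0}" and r: "r \<in> {0..t 0}"
    and hs: "\<And>z. z \<in> D \<Longrightarrow> hasA v s G z" and hr: "\<And>z. z \<in> D \<Longrightarrow> hasA v r G z"
    and hrs: "\<And>z. z \<in> D \<Longrightarrow> hasA v r (dA v s G) z" and hsr: "\<And>z. z \<in> D \<Longrightarrow> hasA v s (dA v r G) z"
    and crs: "continuous_on D (dA v r (dA v s G))" and csr: "continuous_on D (dA v s (dA v r G))"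
  shows "dA v r (dA v s G) z = dA v s (dA v r G) z"
proof -
  obtain \<alpha> \<beta> where z_eq: "z = (\<alpha>, \<beta>)" by (cases z)
  define p where "p x y = \<alpha> + x *\<^sub>R v s + y *\<^sub>R v r" for x y :: real
  obtain e where "e > 0" and inD: "\<And>x y. \<bar>x\<bar> < e \<Longrightarrow> \<bar>y\<bar> < e \<Longrightarrow> (p x y, \<beta>) \<in> D"
    using frame_plane_chart[OF z[unfolded z_eq] s r] unfolding p_def by blast
  have cont: "continuous (at (0, 0)) (\<lambda>q. H (p (fst q) (snd q), \<beta>))"
    if "continuous_on D H" for H :: "'a stempt \<Rightarrow> 'b"
    using continuous_at_frame_plane[OF that \<open>e > 0\<close> inD[unfolded p_def]] by (simp add: p_def)
  \<comment> \<open>componentwise, this is the real Clairaut lemma on the plane through \<open>z\<close>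
     spanned by \<open>v s\<close> and \<open>v r\<close>\<close>
  have "inner (dA v r (dA v s G) (p 0 0, \<beta>)) i = inner (dA v s (dA v r G) (p 0 0, \<beta>)) i" for i
  proof (rule mixed_partials_commute[where \<phi> = "\<lambda>x y. inner (G (p x y, \<beta>)) i"
        and \<phi>\<^sub>1 = "\<lambda>x y. inner (dA v s G (p x y, \<beta>)) i" and \<phi>\<^sub>2 = "\<lambda>x y. inner (dA v r G (p x y, \<beta>)) i"
        and \<phi>\<^sub>1\<^sub>2 = "\<lambda>x y. inner (dA v r (dA v s G) (p x y, \<beta>)) i"
        and \<phi>\<^sub>2\<^sub>1 = "\<lambda>x y. inner (dA v s (dA v r G) (p x y, \<beta>)) i", OF \<open>e > 0\<close>])
    fix x y :: real assume "\<bar>x\<bar> < e" "\<bar>y\<bar> < e"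
    note xy = inD[OF this]
    have px: "p (x + \<rho>) y = p x y + \<rho> *\<^sub>R v s" and py: "p x (y + \<rho>) = p x y + \<rho> *\<^sub>R v r" for \<rho>
      by (simp_all add: p_def scaleR_add_left add_ac)
    show "((\<lambda>x. inner (G (p x y, \<beta>)) i) has_real_derivative inner (dA v s G (p x y, \<beta>)) i) (at x)"
      by (rule hasA_real_derivative_inner[where p = "\<lambda>x. p x y", OF hs[OF xy] px])
    show "((\<lambda>x. inner (dA v r G (p x y, \<beta>)) i) has_real_derivative inner (dA v s (dA v r G) (p x y, \<beta>)) i) (at x)"
      by (rule hasA_real_derivative_inner[where p = "\<lambda>x. p x y", OF hsr[OF xy] px])
    show "((\<lambda>y. inner (G (p x y, \<beta>)) i) has_real_derivative inner (dA v r G (p x y, \<beta>)) i) (at y)"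
      by (rule hasA_real_derivative_inner[where p = "p x", OF hr[OF xy] py])
    show "((\<lambda>y. inner (dA v s G (p x y, \<beta>)) i) has_real_derivative inner (dA v r (dA v s G) (p x y, \<beta>)) i) (at y)"
      by (rule hasA_real_derivative_inner[where p = "p x", OF hrs[OF xy] py])
  qed (intro continuous_intros cont crs csr)+
  moreover have "p 0 0 = \<alpha>" by (simp add: p_def)
  ultimately show ?thesis unfolding z_eq by (metis euclidean_eqI)
qed

lemma dbar_alpha_conj_dbar_alpha:
  assumes z: "z \<in> D" and G: "Cp v (t 0) \<tau> D 2 G"
  shows "dbar_alpha v (t 0) 0 (dbar_alpha v (t 0) 1 G) z = (\<Sum>s=0..t 0. dA v s (dA v s G) z)"
proof -
  let ?R = "{1..t 0}"
  define M where "M s r = dA v s (dA v r G) z" for s r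
  have hA: "\<And>s z. s \<in> {0..t 0} \<Longrightarrow> z \<in> D \<Longrightarrow> hasA v s G z"
    and G1: "\<And>s. s \<in> {0..t 0} \<Longrightarrow> Cp v (t 0) \<tau> D (Suc 0) (dA v s G)"
    using Cp_SucD(2,3)[of v "t 0" \<tau> D "Suc 0" G] G by (simp_all add: numeral_2_eq_2)
  have hAA: "\<And>s r z. s \<in> {0..t 0} \<Longrightarrow> r \<in> {0..t 0} \<Longrightarrow> z \<in> D \<Longrightarrow> hasA v r (dA v s G) z"
    and cAA: "\<And>s r. s \<in> {0..t 0} \<Longrightarrow> r \<in> {0..t 0} \<Longrightarrow> continuous_on D (dA v r (dA v s G))"
    using Cp_SucD(2,3)[OF G1] by auto
  have sym: "M s r = M r s" if "s \<in> {0..t 0}" "r \<in> {0..t 0}" for s r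
    unfolding M_def by (rule dA_dA_commute[OF z that(2,1)]) (use hA hAA cAA that in auto)
  have dbar1: "dA v s (dbar_alpha v (t 0) 1 G) z = M s 0 + (\<Sum>r\<in>?R. v r * M s r)" if "s \<in> {0..t 0}" for s
  proof -
    have "dA v s (dbar_alpha v (t 0) 1 G) z
        = dA v s (dA v 0 G) z - ((-1::real) ^ 1) *\<^sub>R (\<Sum>r\<in>?R. v r * dA v s (dA v r G) z)"
      unfolding dbar_alpha_def by (rule dA_diff_scaleR_sum) (use that hAA z in auto)
    then show ?thesis by (simp add: M_def)
  qed
  have "dbar_alpha v (t 0) 0 (dbar_alpha v (t 0) 1 G) z
      = M 0 0 + (\<Sum>r\<in>?R. v r * M 0 r) - (\<Sum>s\<in>?R. v s * (M s 0 + (\<Sum>r\<in>?R. v r * M s r)))"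
    using dbar1 by (simp add: dbar_alpha_def[of v "t 0" 0])
  also have "(\<Sum>r\<in>?R. v r * M 0 r) = (\<Sum>s\<in>?R. v s * M s 0)" using sym by (intro sum.cong) auto
  also have "M 0 0 + (\<Sum>s\<in>?R. v s * M s 0) - (\<Sum>s\<in>?R. v s * (M s 0 + (\<Sum>r\<in>?R. v r * M s r)))
      = M 0 0 - (\<Sum>s\<in>?R. \<Sum>r\<in>?R. v s * (v r * M s r))"
    by (simp add: distrib_left sum.distrib sum_distrib_left)
  also have "\<dots> = M 0 0 + (\<Sum>s\<in>?R. M s s)"
    using frame_double_sum_symmetric[of ?R M] sym t0_le_N by auto
  also have "\<dots> = (\<Sum>s=0..t 0. M s s)" by (simp add: sum.atLeast_Suc_atMost)
  finally show ?thesis unfolding M_def .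
qed

lemma slice_dbar_eq_induced_dbarT:
  assumes F: "\<forall>K. K \<subseteq> {1..\<tau>} \<longrightarrow> Cp v (t 0) \<tau> D 1 (F K)"
    and ind: "\<forall>a b. (a, b) \<in> D \<longrightarrow> f (a + betaJ \<tau> b J) = (\<Sum>K\<in>Pow {1..\<tau>}. JK J K * F K (a, b))"
    and ab: "(a, b) \<in> D" and J: "J \<in> torus v t \<tau>"
  defines "x \<equiv> a + betaJ \<tau> b J"
  shows "(\<forall>s\<in>{0..t 0}. hasd f (v s) x) \<and> (\<forall>u\<in>{1..\<tau>}. hasd f (J u) x)"
    and "(\<Sum>s=0..t 0. v s * dd f (v s) x) + (\<Sum>u=1..\<tau>. J u * dd f (J u) x)
       = (\<Sum>K\<in>Pow {1..\<tau>}. JK J K * dbarT v (t 0) \<tau> F K (a, b))"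
proof -
  have F1: "\<And>K. K \<subseteq> {1..\<tau>} \<Longrightarrow> Cp v (t 0) \<tau> D (Suc 0) (F K)" using F by simp
  have hA: "\<forall>K. K \<subseteq> {1..\<tau>} \<longrightarrow> hasA v s (F K) (a, b)" if "s \<in> {0..t 0}" for s
    using Cp_SucD(2)[OF F1 that ab] by blast
  have hB: "\<forall>K. K \<subseteq> {1..\<tau>} \<longrightarrow> hasB u (F K) (a, b)" if "u \<in> {1..\<tau>}" for u
    using Cp_SucD(4)[OF F1 that ab] by blast
  have dv: "hasd f (v s) x \<and> dd f (v s) x = (\<Sum>K\<in>Pow {1..\<tau>}. JK J K * dA v s (F K) (a, b))"
    if "s \<in> {0..t 0}" for s
    using slice_frame_derivative[OF ind ab that hA[OF that]] unfolding x_def by blast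
  have dJ: "hasd f (J u) x \<and> dd f (J u) x = (\<Sum>K\<in>Pow {1..\<tau>}. JK J K * dB u (F K) (a, b))"
    if "u \<in> {1..\<tau>}" for u
    using slice_torus_derivative[OF ind ab that hB[OF that]] unfolding x_def by blast
  show "(\<forall>s\<in>{0..t 0}. hasd f (v s) x) \<and> (\<forall>u\<in>{1..\<tau>}. hasd f (J u) x)"
    using dv dJ by blast
  have "(\<Sum>s=0..t 0. v s * dd f (v s) x) + (\<Sum>u=1..\<tau>. J u * dd f (J u) x)
      = (\<Sum>s=0..t 0. v s * (\<Sum>K\<in>Pow {1..\<tau>}. JK J K * dA v s (F K) (a, b)))
        + (\<Sum>u=1..\<tau>. J u * (\<Sum>K\<in>Pow {1..\<tau>}. JK J K * dB u (F K) (a, b)))"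
    using dv dJ by (intro arg_cong2[where f = "(+)"] sum.cong) auto
  also have "\<dots> = (\<Sum>K\<in>Pow {1..\<tau>}. JK J K * dbarT v (t 0) \<tau> F K (a, b))"
    unfolding frame_mult_JK_sum[OF J] torus_mult_JK_sum[OF J] dbarT_def dbar_alpha_def toggle_def
    by (simp add: sum.distrib[symmetric] distrib_left)
  finally show "(\<Sum>s=0..t 0. v s * dd f (v s) x) + (\<Sum>u=1..\<tau>. J u * dd f (J u) x)
       = (\<Sum>K\<in>Pow {1..\<tau>}. JK J K * dbarT v (t 0) \<tau> F K (a, b))" .
qed

lemma slice_second_frame_derivative:
  assumes F: "\<forall>K. K \<subseteq> {1..\<tau>} \<longrightarrow> Cp v (t 0) \<tau> D 2 (F K)"
    and ind: "\<forall>a b. (a, b) \<in> D \<longrightarrow> f (a + betaJ \<tau> b J) = (\<Sum>K\<in>Pow {1..\<tau>}. JK J K * F K (a, b))"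
    and ab: "(a, b) \<in> D" and s: "s \<in> {0..t 0}"
  defines "x \<equiv> a + betaJ \<tau> b J"
  shows "hasd f (v s) x \<and> hasd (dd f (v s)) (v s) x"
    and "dd (dd f (v s)) (v s) x = (\<Sum>K\<in>Pow {1..\<tau>}. JK J K * dA v s (dA v s (F K)) (a, b))"
proof -
  have F2: "\<And>K. K \<subseteq> {1..\<tau>} \<Longrightarrow> Cp v (t 0) \<tau> D (Suc (Suc 0)) (F K)"
    using F by (simp add: numeral_2_eq_2)
  have hA: "\<forall>K. K \<subseteq> {1..\<tau>} \<longrightarrow> hasA v s (F K) z" if "z \<in> D" for z
    using Cp_SucD(2)[OF F2 s that] by blast
  have hAA: "\<forall>K. K \<subseteq> {1..\<tau>} \<longrightarrow> hasA v s (dA v s (F K)) (a, b)"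
    using Cp_SucD(2)[OF Cp_SucD(3)[OF F2 s] s ab] by blast
  have ind_s: "\<forall>a' b'. (a', b') \<in> D \<longrightarrow>
      dd f (v s) (a' + betaJ \<tau> b' J) = (\<Sum>K\<in>Pow {1..\<tau>}. JK J K * dA v s (F K) (a', b'))"
    using slice_frame_derivative(2)[OF ind _ s hA] by blast
  show "hasd f (v s) x \<and> hasd (dd f (v s)) (v s) x"
    and "dd (dd f (v s)) (v s) x = (\<Sum>K\<in>Pow {1..\<tau>}. JK J K * dA v s (dA v s (F K)) (a, b))"
    using slice_frame_derivative[OF ind ab s hA[OF ab]] slice_frame_derivative[OF ind_s ab s hAA]
    unfolding x_def by blast+
qed

lemma slice_second_torus_derivative:
  assumes F: "\<forall>K. K \<subseteq> {1..\<tau>} \<longrightarrow> Cp v (t 0) \<tau> D 2 (F K)"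
    and ind: "\<forall>a b. (a, b) \<in> D \<longrightarrow> f (a + betaJ \<tau> b J) = (\<Sum>K\<in>Pow {1..\<tau>}. JK J K * F K (a, b))"
    and ab: "(a, b) \<in> D" and u: "u \<in> {1..\<tau>}"
  defines "x \<equiv> a + betaJ \<tau> b J"
  shows "hasd f (J u) x \<and> hasd (dd f (J u)) (J u) x"
    and "dd (dd f (J u)) (J u) x = (\<Sum>K\<in>Pow {1..\<tau>}. JK J K * dB u (dB u (F K)) (a, b))"
proof -
  have F2: "\<And>K. K \<subseteq> {1..\<tau>} \<Longrightarrow> Cp v (t 0) \<tau> D (Suc (Suc 0)) (F K)"
    using F by (simp add: numeral_2_eq_2)
  have hB: "\<forall>K. K \<subseteq> {1..\<tau>} \<longrightarrow> hasB u (F K) z" if "z \<in> D" for z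
    using Cp_SucD(4)[OF F2 u that] by blast
  have hBB: "\<forall>K. K \<subseteq> {1..\<tau>} \<longrightarrow> hasB u (dB u (F K)) (a, b)"
    using Cp_SucD(4)[OF Cp_SucD(5)[OF F2 u] u ab] by blast
  have ind_u: "\<forall>a' b'. (a', b') \<in> D \<longrightarrow>
      dd f (J u) (a' + betaJ \<tau> b' J) = (\<Sum>K\<in>Pow {1..\<tau>}. JK J K * dB u (F K) (a', b'))"
    using slice_torus_derivative(2)[OF ind _ u hB] by blast
  show "hasd f (J u) x \<and> hasd (dd f (J u)) (J u) x"
    and "dd (dd f (J u)) (J u) x = (\<Sum>K\<in>Pow {1..\<tau>}. JK J K * dB u (dB u (F K)) (a, b))"
    using slice_torus_derivative[OF ind ab u hB[OF ab]] slice_torus_derivative[OF ind_u ab u hBB]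
    unfolding x_def by blast+
qed

lemma slice_laplacian_eq_induced_LapT:
  assumes F: "\<forall>K. K \<subseteq> {1..\<tau>} \<longrightarrow> Cp v (t 0) \<tau> D 2 (F K)"
    and ind: "\<forall>a b. (a, b) \<in> D \<longrightarrow> f (a + betaJ \<tau> b J) = (\<Sum>K\<in>Pow {1..\<tau>}. JK J K * F K (a, b))"
    and ab: "(a, b) \<in> D"
  defines "x \<equiv> a + betaJ \<tau> b J"
  shows "(\<forall>s\<in>{0..t 0}. hasd f (v s) x \<and> hasd (dd f (v s)) (v s) x)
       \<and> (\<forall>u\<in>{1..\<tau>}. hasd f (J u) x \<and> hasd (dd f (J u)) (J u) x)"
    and "(\<Sum>s=0..t 0. dd (dd f (v s)) (v s) x) + (\<Sum>u=1..\<tau>. dd (dd f (J u)) (J u) x)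
       = (\<Sum>K\<in>Pow {1..\<tau>}. JK J K * LapT v (t 0) \<tau> F K (a, b))"
proof -
  note dv = slice_second_frame_derivative[OF F ind ab, folded x_def]
    and dJ = slice_second_torus_derivative[OF F ind ab, folded x_def]
  show "(\<forall>s\<in>{0..t 0}. hasd f (v s) x \<and> hasd (dd f (v s)) (v s) x)
      \<and> (\<forall>u\<in>{1..\<tau>}. hasd f (J u) x \<and> hasd (dd f (J u)) (J u) x)"
    using dv(1) dJ(1) by blast
  have "(\<Sum>s=0..t 0. dd (dd f (v s)) (v s) x) + (\<Sum>u=1..\<tau>. dd (dd f (J u)) (J u) x)
      = (\<Sum>s=0..t 0. \<Sum>K\<in>Pow {1..\<tau>}. JK J K * dA v s (dA v s (F K)) (a, b))
        + (\<Sum>u=1..\<tau>. \<Sum>K\<in>Pow {1..\<tau>}. JK J K * dB u (dB u (F K)) (a, b))"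
    using dv(2) dJ(2) by (intro arg_cong2[where f = "(+)"] sum.cong) auto
  also have "\<dots> = (\<Sum>K\<in>Pow {1..\<tau>}. \<Sum>s=0..t 0. JK J K * dA v s (dA v s (F K)) (a, b))
        + (\<Sum>K\<in>Pow {1..\<tau>}. \<Sum>u=1..\<tau>. JK J K * dB u (dB u (F K)) (a, b))"
    by (rule arg_cong2[where f = "(+)"]; rule sum.swap)
  also have "\<dots> = (\<Sum>K\<in>Pow {1..\<tau>}. JK J K * ((\<Sum>s=0..t 0. dA v s (dA v s (F K)) (a, b))
      + (\<Sum>u=1..\<tau>. dB u (dB u (F K)) (a, b))))"
    by (simp add: sum_distrib_left distrib_left sum.distrib)
  also have "\<dots> = (\<Sum>K\<in>Pow {1..\<tau>}. JK J K * LapT v (t 0) \<tau> F K (a, b))"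
    using dbar_alpha_conj_dbar_alpha[OF ab] F unfolding LapT_def by (intro sum.cong) auto
  finally show "(\<Sum>s=0..t 0. dd (dd f (v s)) (v s) x) + (\<Sum>u=1..\<tau>. dd (dd f (J u)) (J u) x)
       = (\<Sum>K\<in>Pow {1..\<tau>}. JK J K * LapT v (t 0) \<tau> F K (a, b))" .
qed

lemma slicewise_iff_Ivanishes:
  assumes "\<And>a b J. (a, b) \<in> D \<Longrightarrow> J \<in> torus v t \<tau> \<Longrightarrow>
      P J (a + betaJ \<tau> b J) \<longleftrightarrow> (\<Sum>K\<in>Pow {1..\<tau>}. JK J K * G K (a, b)) = 0"
  shows "(\<forall>J\<in>torus v t \<tau>. \<forall>x\<in>OmegaD v t \<tau> D \<inter> RJ v (t 0) \<tau> J. P J x) \<longleftrightarrow> Ivanishes v t \<tau> D G"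
proof
  assume slicewise: "\<forall>J\<in>torus v t \<tau>. \<forall>x\<in>OmegaD v t \<tau> D \<inter> RJ v (t 0) \<tau> J. P J x"
  show "Ivanishes v t \<tau> D G"
    unfolding Ivanishes_def
  proof (intro allI impI)
    fix a b J assume "(a, b) \<in> D" "J \<in> torus v t \<tau>"
    then have "P J (a + betaJ \<tau> b J)" using slicewise slice_points by blast
    then show "(\<Sum>K\<in>Pow {1..\<tau>}. JK J K * G K (a, b)) = 0"
      using assms \<open>(a, b) \<in> D\<close> \<open>J \<in> torus v t \<tau>\<close> by blast
  qed
qed (use assms in \<open>auto simp: slice_points Ivanishes_def\<close>)

lemma Ivanishes_iff_components_eq_0: "Ivanishes v t \<tau> D G \<longleftrightarrow> (\<forall>K z. K \<subseteq> {1..\<tau>} \<longrightarrow> z \<in> D \<longrightarrow> G K z = 0)"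
proof
  assume "Ivanishes v t \<tau> D G"
  show "\<forall>K z. K \<subseteq> {1..\<tau>} \<longrightarrow> z \<in> D \<longrightarrow> G K z = 0"
  proof (intro allI impI)
    fix K z assume "K \<subseteq> {1..\<tau>}" "z \<in> D"
    then show "G K z = 0"
      using \<open>Ivanishes v t \<tau> D G\<close> JK_sum_eq_0_imp_coeff_eq_0[where c = "\<lambda>K. G K z"]
      unfolding Ivanishes_def by (metis surj_pair)
  qed
qed (simp add: Ivanishes_def)

lemma T_regular_iff_Ivanishes_dbarT:
  assumes F: "F \<in> Stem v (t 0) \<tau> D 1" and f: "induces v t \<tau> D F f"
  shows "T_regular v t \<tau> D f \<longleftrightarrow> Ivanishes v t \<tau> D (dbarT v (t 0) \<tau> F)"
  unfolding T_regular_def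
proof (rule slicewise_iff_Ivanishes, goal_cases)
  case (1 a b J)
  have F': "\<forall>K. K \<subseteq> {1..\<tau>} \<longrightarrow> Cp v (t 0) \<tau> D 1 (F K)" using F by (simp add: Stem_def)
  have ind: "\<forall>a b. (a, b) \<in> D \<longrightarrow> f (a + betaJ \<tau> b J) = (\<Sum>K\<in>Pow {1..\<tau>}. JK J K * F K (a, b))"
    using f 1 by (simp add: induces_def)
  note pt = slice_dbar_eq_induced_dbarT[OF F' ind 1]
  show ?case unfolding pt(2) using pt(1) by blast
qed

lemma T_harmonic_iff_Ivanishes_LapT:
  assumes F: "F \<in> Stem v (t 0) \<tau> D 2" and f: "induces v t \<tau> D F f"
  shows "T_harmonic v t \<tau> D f \<longleftrightarrow> Ivanishes v t \<tau> D (LapT v (t 0) \<tau> F)"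
  unfolding T_harmonic_def
proof (rule slicewise_iff_Ivanishes, goal_cases)
  case (1 a b J)
  have F': "\<forall>K. K \<subseteq> {1..\<tau>} \<longrightarrow> Cp v (t 0) \<tau> D 2 (F K)" using F by (simp add: Stem_def)
  have ind: "\<forall>a b. (a, b) \<in> D \<longrightarrow> f (a + betaJ \<tau> b J) = (\<Sum>K\<in>Pow {1..\<tau>}. JK J K * F K (a, b))"
    using f 1 by (simp add: induces_def)
  note pt = slice_laplacian_eq_induced_LapT[OF F' ind 1(1)]
  show ?case unfolding pt(2) using pt(1) by blast
qed

lemma SR_eq_induced_dbarT_kernel:
  "SR v t \<tau> D = {f. \<exists>F\<in>Stem v (t 0) \<tau> D 1.
      (\<forall>K z. K \<subseteq> {1..\<tau>} \<longrightarrow> z \<in> D \<longrightarrow> dbarT v (t 0) \<tau> F K z = 0) \<and> induces v t \<tau> D F f}"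
  unfolding SR_def Sp_def
  using T_regular_iff_Ivanishes_dbarT Ivanishes_iff_components_eq_0 by blast

lemma T_harmonic_eq_induced_LapT_kernel:
  "{f \<in> Sp v t \<tau> D 2. T_harmonic v t \<tau> D f} = {f. \<exists>F\<in>Stem v (t 0) \<tau> D 2.
      (\<forall>K z. K \<subseteq> {1..\<tau>} \<longrightarrow> z \<in> D \<longrightarrow> LapT v (t 0) \<tau> F K z = 0) \<and> induces v t \<tau> D F f}"
  unfolding Sp_def
  using T_harmonic_iff_Ivanishes_LapT Ivanishes_iff_components_eq_0 by blast

end

lemma SA_square: "x \<in> SA cj \<Longrightarrow> x * x = -1"
proof -
  assume "x \<in> SA cj"
  then have "cj x = - x" "x * cj x = 1" unfolding SA_def by (auto simp: add_eq_0_iff)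
  then show ?thesis by (metis minus_minus mult_minus_right)
qed

theorem corollary3p10:
  fixes cj :: "'a::{real_algebra_1,euclidean_space} \<Rightarrow> 'a"
    and v :: "nat \<Rightarrow> 'a" and N :: nat and t :: "nat \<Rightarrow> nat" and \<tau> :: nat
    and D :: "'a stempt set"
  assumes inv_lin: "linear cj"
    and inv_anti: "\<And>x y. cj (x * y) = cj y * cj x"
    and inv_inv: "\<And>x. cj (cj x) = x"
    and SA_ne: "SA cj \<noteq> {}"
    and N1: "N \<ge> 1"
    and v0: "v 0 = 1"
    and vS: "\<And>s. s \<in> {1..N} \<Longrightarrow> v s \<in> SA cj"
    and vanti: "\<And>s r. s \<in> {1..N} \<Longrightarrow> r \<in> {1..N} \<Longrightarrow> s \<noteq> r \<Longrightarrow> v s * v r = - (v r * v s)"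
    and vON: "\<And>s r. s \<le> N \<Longrightarrow> r \<le> N \<Longrightarrow> inner (v s) (v r) = (if s = r then 1 else 0)"
    and Vslice: "\<And>x. x \<in> Rlm v 0 N \<Longrightarrow> \<exists>J\<in>SA cj. \<exists>a b. x = a *\<^sub>R 1 + b *\<^sub>R J"
    and t_mono: "strict_mono_on {0..\<tau>} t"
    and t_last: "t \<tau> = N"
    and D_open: "openin (top_of_set (Rlm v 0 (t 0) \<times> Rtau \<tau>)) D"
    and D_refl: "\<And>\<alpha> \<beta> h. (\<alpha>, \<beta>) \<in> D \<Longrightarrow> h \<in> {1..\<tau>} \<Longrightarrow> (\<alpha>, flip h \<beta>) \<in> D"
    and Omega_open: "openin (top_of_set (Rlm v 0 N)) (OmegaD v t \<tau> D)"
  shows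
    "(\<forall>F f. F \<in> Stem v (t 0) \<tau> D 1 \<and> induces v t \<tau> D F f \<longrightarrow>
        (T_regular v t \<tau> D f \<longleftrightarrow> Ivanishes v t \<tau> D (dbarT v (t 0) \<tau> F)))
   \<and> (connected (OmegaD v t \<tau> D) \<longrightarrow>
        SR v t \<tau> D = {f. \<exists>F\<in>Stem v (t 0) \<tau> D 1.
                           (\<forall>K z. K \<subseteq> {1..\<tau>} \<longrightarrow> z \<in> D \<longrightarrow> dbarT v (t 0) \<tau> F K z = 0)
                           \<and> induces v t \<tau> D F f})
   \<and> (\<forall>F f. F \<in> Stem v (t 0) \<tau> D 2 \<and> induces v t \<tau> D F f \<longrightarrow>
        (T_harmonic v t \<tau> D f \<longleftrightarrow> Ivanishes v t \<tau> D (LapT v (t 0) \<tau> F)))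
   \<and> {f \<in> Sp v t \<tau> D 2. T_harmonic v t \<tau> D f}
       = {f. \<exists>F\<in>Stem v (t 0) \<tau> D 2.
               (\<forall>K z. K \<subseteq> {1..\<tau>} \<longrightarrow> z \<in> D \<longrightarrow> LapT v (t 0) \<tau> F K z = 0)
               \<and> induces v t \<tau> D F f}"
proof -
  have "v s * v s = -1" if "s \<in> {1..N}" for s
    using SA_square vS[OF that] .
  then interpret stem_domain v N t \<tau> D
    using v0 vanti vON t_mono t_last D_open D_refl by unfold_locales
  show ?thesis
    using T_regular_iff_Ivanishes_dbarT SR_eq_induced_dbarT_kernel
      T_harmonic_iff_Ivanishes_LapT T_harmonic_eq_induced_LapT_kernel by blast
qed

end
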